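(* In the variables $(y_j,f_j)$ of the polynomial system \[ y_{j,x}=2y_jf_j-\alpha_j,\quad f_{j,x}=u-f_j^2-\lambda_j,\quad y_{j,t}=2u_xy_j-2(u+2\lambda_j)y_{j,x},\quad f_{j,t}=\bigl(u_x-2(u+2\lambda_j)f_j\bigr)_x, \] $u=\frac{x}{6t}+\frac{1}{3t}(y_1+\dots+y_n)$, the following birational maps send solutions with parameters $\alpha$ to solutions with parameters $\tilde\alpha$ (the $\lambda_j$ unchanged): $A_k$: $\tilde y_j=y_j$ for all $j$; $\tilde f_j=f_j$, $\tilde\alpha_j=\alpha_j$ for $j\neq k$; $\tilde f_k=f_k-\frac{\alpha_k}{y_k}$, $\tilde\alpha_k=-\alpha_k$. $B_k$: $\tilde f_j=-f_k-\frac{\lambda_j-\lambda_k}{f_j-f_k}$ ($j\neq k$), $\tilde f_k=-f_k$; $\tilde y_j=\frac{f_j-f_k}{\lambda_j-\lambda_k}\bigl((f_j-f_k)y_j-\alpha_j\bigr)$, $\tilde\alpha_j=\alpha_j$ ($j\neq k$); $\tilde y_k=-y_k+6t(f_k^2+\lambda_k)-x-\sum_{j\neq k}(\tilde y_j+y_j)$, $\tilde\alpha_k=1-\alpha_k$. These maps satisfy $A_k^2=\mathrm{id}$, $A_jA_k=A_kA_j$, $B_k^2=\mathrm{id}$, $B_jB_k=B_kB_j$, $A_jB_k=B_kA_j$ for $j\neq k$.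
   Context: $n\ge1$; $\lambda_1,\dots,\lambda_n$ pairwise distinct constants; $\alpha_1,\dots,\alpha_n$ constants; $k\in\{1,\dots,n\}$. Formulas are considered where denominators are nonzero. *)

theory Defs
  imports "HOL-Analysis.Analysis"
begin

text \<open>A point of the phase space: (y, f, alpha), each indexed by j in {1..n}.\<close>
type_synonym st = "(nat \<Rightarrow> complex) \<times> (nat \<Rightarrow> complex) \<times> (nat \<Rightarrow> complex)"

definition px :: "(complex \<Rightarrow> complex \<Rightarrow> complex) \<Rightarrow> complex \<Rightarrow> complex \<Rightarrow> complex" where
  "px g x t = deriv (\<lambda>s. g s t) x"
definition pt :: "(complex \<Rightarrow> complex \<Rightarrow> complex) \<Rightarrow> complex \<Rightarrow> complex \<Rightarrow> complex" where
  "pt g x t = deriv (\<lambda>s. g x s) t"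

definition uu :: "nat \<Rightarrow> (nat \<Rightarrow> complex \<Rightarrow> complex \<Rightarrow> complex) \<Rightarrow> complex \<Rightarrow> complex \<Rightarrow> complex" where
  "uu n Y x t = x / (6 * t) + (1 / (3 * t)) * (\<Sum>i\<in>{1..n}. Y i x t)"

definition is_solution ::
  "nat \<Rightarrow> (nat \<Rightarrow> complex) \<Rightarrow> (nat \<Rightarrow> complex) \<Rightarrow> (complex \<times> complex) set
   \<Rightarrow> (nat \<Rightarrow> complex \<Rightarrow> complex \<Rightarrow> complex) \<Rightarrow> (nat \<Rightarrow> complex \<Rightarrow> complex \<Rightarrow> complex) \<Rightarrow> bool" where
  "is_solution n lam a U Y F \<longleftrightarrow>
    (\<forall>j\<in>{1..n}. \<forall>(x,t)\<in>U.
       (\<lambda>s. Y j s t) field_differentiable (at x) \<and>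
       (\<lambda>s. Y j x s) field_differentiable (at t) \<and>
       (\<lambda>s. F j s t) field_differentiable (at x) \<and>
       (\<lambda>s. F j x s) field_differentiable (at t) \<and>
       px (Y j) x t = 2 * Y j x t * F j x t - a j \<and>
       px (F j) x t = uu n Y x t - (F j x t)\<^sup>2 - lam j \<and>
       pt (Y j) x t = 2 * px (uu n Y) x t * Y j x t - 2 * (uu n Y x t + 2 * lam j) * px (Y j) x t \<and>
       ((\<lambda>s. px (uu n Y) s t - 2 * (uu n Y s t + 2 * lam j) * F j s t)
          has_field_derivative pt (F j) x t) (at x))"

definition A_map :: "nat \<Rightarrow> st \<Rightarrow> st" where
  "A_map k s = (case s of (y, f, a) \<Rightarrow> (y, f(k := f k - a k / y k), a(k := - a k)))"

definition A_ok :: "nat \<Rightarrow> st \<Rightarrow> bool" where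
  "A_ok k s = (fst s k \<noteq> 0)"

definition B_map :: "nat \<Rightarrow> (nat \<Rightarrow> complex) \<Rightarrow> nat \<Rightarrow> complex \<Rightarrow> complex \<Rightarrow> st \<Rightarrow> st" where
  "B_map n lam k x t s = (case s of (y, f, a) \<Rightarrow>
     (let yo = (\<lambda>j. (f j - f k) / (lam j - lam k) * ((f j - f k) * y j - a j))
      in (yo(k := - y k + 6 * t * ((f k)\<^sup>2 + lam k) - x - (\<Sum>j\<in>{1..n} - {k}. yo j + y j)),
          (\<lambda>j. - f k - (lam j - lam k) / (f j - f k))(k := - f k),
          a(k := 1 - a k))))"

text \<open>Denominators of B_k nonzero (the lambdas are assumed pairwise distinct separately).\<close>
definition B_ok :: "nat \<Rightarrow> nat \<Rightarrow> st \<Rightarrow> bool" where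
  "B_ok n k s = (\<forall>j\<in>{1..n} - {k}. fst (snd s) j \<noteq> fst (snd s) k)"

definition eq_on :: "nat \<Rightarrow> st \<Rightarrow> st \<Rightarrow> bool" where
  "eq_on n s s' = (\<forall>j\<in>{1..n}. fst s j = fst s' j \<and> fst (snd s) j = fst (snd s') j
                              \<and> snd (snd s) j = snd (snd s') j)"

definition trY :: "(complex \<Rightarrow> complex \<Rightarrow> st \<Rightarrow> st) \<Rightarrow> (nat \<Rightarrow> complex)
   \<Rightarrow> (nat \<Rightarrow> complex \<Rightarrow> complex \<Rightarrow> complex) \<Rightarrow> (nat \<Rightarrow> complex \<Rightarrow> complex \<Rightarrow> complex)
   \<Rightarrow> nat \<Rightarrow> complex \<Rightarrow> complex \<Rightarrow> complex" where
  "trY M a Y F j x t = fst (M x t (\<lambda>i. Y i x t, \<lambda>i. F i x t, a)) j"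
definition trF :: "(complex \<Rightarrow> complex \<Rightarrow> st \<Rightarrow> st) \<Rightarrow> (nat \<Rightarrow> complex)
   \<Rightarrow> (nat \<Rightarrow> complex \<Rightarrow> complex \<Rightarrow> complex) \<Rightarrow> (nat \<Rightarrow> complex \<Rightarrow> complex \<Rightarrow> complex)
   \<Rightarrow> nat \<Rightarrow> complex \<Rightarrow> complex \<Rightarrow> complex" where
  "trF M a Y F j x t = fst (snd (M x t (\<lambda>i. Y i x t, \<lambda>i. F i x t, a))) j"

end

theory Submission
  imports Defs
begin

text \<open>The \<open>x\<close>-equations determine \<open>u\<^sub>x\<close> and \<open>u\<^sub>x\<^sub>x\<close> as polynomials in the \<open>y\<^sub>j, f\<^sub>j\<close>
  (\<open>u\<close> itself is affine in the \<open>y\<^sub>j\<close>), so the system is equivalent to an explicit first-order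
  system in \<open>x\<close> and in \<open>t\<close> whose right-hand sides are rational functions of the state.
  Preservation of solutions under \<open>A\<^sub>k\<close> and \<open>B\<^sub>k\<close> then reduces, by the chain rule, to rational
  identities in the state.  For \<open>B\<^sub>k\<close> the component \<open>y\<^sub>k\<close> is chosen exactly so that the new
  potential is \<open>-u + 2 f\<^sub>k\<^sup>2 + 2 \<lambda>\<^sub>k\<close>, which closes up the transformed equations.
  The relations between the maps are rational identities checked componentwise.\<close>

type_synonym family = "nat \<Rightarrow> complex \<Rightarrow> complex \<Rightarrow> complex"

section \<open>The system in explicit form\<close>

text \<open>The values of \<open>u\<^sub>x\<close>, \<open>u\<^sub>x\<^sub>x\<close> and of the \<open>t\<close>-derivatives of \<open>y\<^sub>j\<close>, \<open>f\<^sub>j\<close> forced by the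
  \<open>x\<close>-equations.\<close>

definition ux_rhs :: "nat \<Rightarrow> (nat \<Rightarrow> complex) \<Rightarrow> family \<Rightarrow> family \<Rightarrow> complex \<Rightarrow> complex \<Rightarrow> complex" where
  "ux_rhs n a Y F x t = 1/(6*t) + (1/(3*t)) * (\<Sum>i\<in>{1..n}. 2 * Y i x t * F i x t - a i)"

definition uxx_rhs :: "nat \<Rightarrow> (nat \<Rightarrow> complex) \<Rightarrow> (nat \<Rightarrow> complex) \<Rightarrow> family \<Rightarrow> family \<Rightarrow> complex \<Rightarrow> complex \<Rightarrow> complex" where
  "uxx_rhs n lam a Y F x t = (1/(3*t)) *
     (\<Sum>i\<in>{1..n}. 2 * ((2 * Y i x t * F i x t - a i) * F i x t + Y i x t * (uu n Y x t - (F i x t)\<^sup>2 - lam i)))"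

definition Yt_rhs :: "nat \<Rightarrow> (nat \<Rightarrow> complex) \<Rightarrow> (nat \<Rightarrow> complex) \<Rightarrow> family \<Rightarrow> family \<Rightarrow> nat \<Rightarrow> complex \<Rightarrow> complex \<Rightarrow> complex" where
  "Yt_rhs n lam a Y F j x t =
     2 * ux_rhs n a Y F x t * Y j x t - 2 * (uu n Y x t + 2 * lam j) * (2 * Y j x t * F j x t - a j)"

definition Ft_rhs :: "nat \<Rightarrow> (nat \<Rightarrow> complex) \<Rightarrow> (nat \<Rightarrow> complex) \<Rightarrow> family \<Rightarrow> family \<Rightarrow> nat \<Rightarrow> complex \<Rightarrow> complex \<Rightarrow> complex" where
  "Ft_rhs n lam a Y F j x t = uxx_rhs n lam a Y F x t
     - 2 * (ux_rhs n a Y F x t * F j x t + (uu n Y x t + 2 * lam j) * (uu n Y x t - (F j x t)\<^sup>2 - lam j))"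

definition solves_x :: "nat \<Rightarrow> (nat \<Rightarrow> complex) \<Rightarrow> (nat \<Rightarrow> complex) \<Rightarrow> (complex \<times> complex) set \<Rightarrow> family \<Rightarrow> family \<Rightarrow> bool" where
  "solves_x n lam a U Y F \<longleftrightarrow> (\<forall>j\<in>{1..n}. \<forall>(x,t)\<in>U.
     ((\<lambda>s. Y j s t) has_field_derivative 2 * Y j x t * F j x t - a j) (at x) \<and>
     ((\<lambda>s. F j s t) has_field_derivative uu n Y x t - (F j x t)\<^sup>2 - lam j) (at x))"

definition solves_xt :: "nat \<Rightarrow> (nat \<Rightarrow> complex) \<Rightarrow> (nat \<Rightarrow> complex) \<Rightarrow> (complex \<times> complex) set \<Rightarrow> family \<Rightarrow> family \<Rightarrow> bool" where
  "solves_xt n lam a U Y F \<longleftrightarrow> solves_x n lam a U Y F \<and> (\<forall>j\<in>{1..n}. \<forall>(x,t)\<in>U.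
     ((\<lambda>s. Y j x s) has_field_derivative Yt_rhs n lam a Y F j x t) (at t) \<and>
     ((\<lambda>s. F j x s) has_field_derivative Ft_rhs n lam a Y F j x t) (at t))"

lemma solves_xD:
  assumes "solves_x n lam a U Y F" "j \<in> {1..n}" "(x,t) \<in> U"
  shows "((\<lambda>s. Y j s t) has_field_derivative 2 * Y j x t * F j x t - a j) (at x)"
    and "((\<lambda>s. F j s t) has_field_derivative uu n Y x t - (F j x t)\<^sup>2 - lam j) (at x)"
  using assms unfolding solves_x_def by fastforce+

lemma solves_xt_solves_x: "solves_xt n lam a U Y F \<Longrightarrow> solves_x n lam a U Y F"
  by (simp add: solves_xt_def)

lemma solves_xtD:
  assumes "solves_xt n lam a U Y F" "j \<in> {1..n}" "(x,t) \<in> U"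
  shows "((\<lambda>s. Y j x s) has_field_derivative Yt_rhs n lam a Y F j x t) (at t)"
    and "((\<lambda>s. F j x s) has_field_derivative Ft_rhs n lam a Y F j x t) (at t)"
  using assms unfolding solves_xt_def by fastforce+

lemma open_x_section:
  assumes "open (U :: (complex \<times> complex) set)"
  shows "open {s. (s,t) \<in> U}"
proof -
  have "open ((\<lambda>s. (s,t)) -` U)"
    using continuous_open_vimage[OF assms, of "\<lambda>s. (s,t)"] by (simp add: continuous_Pair)
  then show ?thesis by (simp add: vimage_def)
qed

lemma uu_has_x_deriv:
  assumes "solves_x n lam a U Y F" "(x,t) \<in> U" "t \<noteq> 0"
  shows "((\<lambda>s. uu n Y s t) has_field_derivative ux_rhs n a Y F x t) (at x)"
  unfolding uu_def ux_rhs_def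
  by (intro derivative_eq_intros DERIV_sum)
     (auto intro: solves_xD(1)[OF assms(1) _ assms(2)] simp: assms(3))

lemma ux_rhs_has_x_deriv:
  assumes X: "solves_x n lam a U Y F" and xt: "(x,t) \<in> U"
  shows "((\<lambda>s. ux_rhs n a Y F s t) has_field_derivative uxx_rhs n lam a Y F x t) (at x)"
proof -
  have "((\<lambda>s. \<Sum>i\<in>{1..n}. 2 * Y i s t * F i s t - a i) has_field_derivative
      (\<Sum>i\<in>{1..n}. 2 * ((2 * Y i x t * F i x t - a i) * F i x t + Y i x t * (uu n Y x t - (F i x t)\<^sup>2 - lam i)))) (at x)"
  proof (rule DERIV_sum)
    fix i assume i: "i \<in> {1..n}"
    show "((\<lambda>s. 2 * Y i s t * F i s t - a i) has_field_derivative
      2 * ((2 * Y i x t * F i x t - a i) * F i x t + Y i x t * (uu n Y x t - (F i x t)\<^sup>2 - lam i))) (at x)"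
      by (rule derivative_eq_intros solves_xD[OF X i xt] refl)+ (simp add: algebra_simps)
  qed
  from DERIV_add[OF DERIV_const[of "1/(6*t)"] DERIV_cmult[OF this, of "1/(3*t)"]]
  show ?thesis unfolding ux_rhs_def uxx_rhs_def by simp
qed

lemma px_uu:
  assumes "solves_x n lam a U Y F" "(x,t) \<in> U" "t \<noteq> 0"
  shows "px (uu n Y) x t = ux_rhs n a Y F x t"
  unfolding px_def using uu_has_x_deriv[OF assms] by (rule DERIV_imp_deriv)

lemma px_uu_has_x_deriv:
  assumes "solves_x n lam a U Y F" "(x,t) \<in> U" "open U" "\<forall>(x,t)\<in>U. t \<noteq> 0"
  shows "((\<lambda>s. px (uu n Y) s t) has_field_derivative uxx_rhs n lam a Y F x t) (at x)"
  by (rule has_field_derivative_transform_within_open[OF ux_rhs_has_x_deriv[OF assms(1,2)]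
        open_x_section[OF assms(3)]])
     (use assms in \<open>auto simp: px_uu[OF assms(1)]\<close>)

lemma Ft_rhs_has_x_deriv:
  assumes "solves_x n lam a U Y F" "(x,t) \<in> U" "open U" "\<forall>(x,t)\<in>U. t \<noteq> 0" "j \<in> {1..n}"
  shows "((\<lambda>s. px (uu n Y) s t - 2 * (uu n Y s t + 2 * lam j) * F j s t) has_field_derivative
     Ft_rhs n lam a Y F j x t) (at x)"
proof -
  have t0: "t \<noteq> 0" using assms(2,4) by auto
  show ?thesis
    unfolding Ft_rhs_def
    by (rule derivative_eq_intros px_uu_has_x_deriv[OF assms(1-4)] uu_has_x_deriv[OF assms(1,2) t0]
          solves_xD(2)[OF assms(1,5,2)] refl)+
       (simp add: algebra_simps)
qed

lemma is_solution_imp_solves_xt: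
  assumes U: "open U" "\<forall>(x,t)\<in>U. t \<noteq> 0" and S: "is_solution n lam a U Y F"
  shows "solves_xt n lam a U Y F"
proof -
  have X: "solves_x n lam a U Y F"
    unfolding solves_x_def
  proof (intro ballI, clarify)
    fix j x t assume "j \<in> {1..n}" "(x,t) \<in> U"
    with S show "((\<lambda>s. Y j s t) has_field_derivative 2 * Y j x t * F j x t - a j) (at x) \<and>
      ((\<lambda>s. F j s t) has_field_derivative uu n Y x t - (F j x t)\<^sup>2 - lam j) (at x)"
      unfolding is_solution_def px_def by (fastforce simp: DERIV_deriv_iff_field_differentiable[symmetric])
  qed
  show ?thesis
    unfolding solves_xt_def
  proof (intro conjI X ballI, clarify)
    fix j x t assume j: "j \<in> {1..n}" and xt: "(x,t) \<in> U"
    have t0: "t \<noteq> 0" using U(2) xt by auto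
    from S j xt have d: "(\<lambda>s. Y j x s) field_differentiable (at t)" "(\<lambda>s. F j x s) field_differentiable (at t)"
      and e: "px (Y j) x t = 2 * Y j x t * F j x t - a j"
        "pt (Y j) x t = 2 * px (uu n Y) x t * Y j x t - 2 * (uu n Y x t + 2 * lam j) * px (Y j) x t"
        "((\<lambda>s. px (uu n Y) s t - 2 * (uu n Y s t + 2 * lam j) * F j s t) has_field_derivative pt (F j) x t) (at x)"
      unfolding is_solution_def by fastforce+
    have "pt (F j) x t = Ft_rhs n lam a Y F j x t"
      using DERIV_unique[OF e(3) Ft_rhs_has_x_deriv[OF X xt U j]] .
    moreover have "pt (Y j) x t = Yt_rhs n lam a Y F j x t"
      using e(1,2) px_uu[OF X xt t0] unfolding Yt_rhs_def by simp
    ultimately show "((\<lambda>s. Y j x s) has_field_derivative Yt_rhs n lam a Y F j x t) (at t) \<and>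
      ((\<lambda>s. F j x s) has_field_derivative Ft_rhs n lam a Y F j x t) (at t)"
      using d unfolding pt_def by (simp add: DERIV_deriv_iff_field_differentiable[symmetric])
  qed
qed

lemma solves_xt_imp_is_solution:
  assumes U: "open U" "\<forall>(x,t)\<in>U. t \<noteq> 0" and S: "solves_xt n lam a U Y F"
  shows "is_solution n lam a U Y F"
  unfolding is_solution_def
proof (intro ballI, clarify)
  fix j x t assume j: "j \<in> {1..n}" and xt: "(x,t) \<in> U"
  have X: "solves_x n lam a U Y F" using S by (rule solves_xt_solves_x)
  have t0: "t \<noteq> 0" using U(2) xt by auto
  note dx = solves_xD[OF X j xt] and dt = solves_xtD[OF S j xt]
  have "px (Y j) x t = 2 * Y j x t * F j x t - a j" "px (F j) x t = uu n Y x t - (F j x t)\<^sup>2 - lam j"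
    unfolding px_def by (rule DERIV_imp_deriv[OF dx(1)], rule DERIV_imp_deriv[OF dx(2)])
  moreover have "pt (Y j) x t = Yt_rhs n lam a Y F j x t" "pt (F j) x t = Ft_rhs n lam a Y F j x t"
    unfolding pt_def by (rule DERIV_imp_deriv[OF dt(1)], rule DERIV_imp_deriv[OF dt(2)])
  ultimately show "(\<lambda>s. Y j s t) field_differentiable at x \<and>
     (\<lambda>s. Y j x s) field_differentiable at t \<and>
     (\<lambda>s. F j s t) field_differentiable at x \<and>
     (\<lambda>s. F j x s) field_differentiable at t \<and>
     px (Y j) x t = 2 * Y j x t * F j x t - a j \<and>
     px (F j) x t = uu n Y x t - (F j x t)\<^sup>2 - lam j \<and>
     pt (Y j) x t = 2 * px (uu n Y) x t * Y j x t - 2 * (uu n Y x t + 2 * lam j) * px (Y j) x t \<and>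
     ((\<lambda>s. px (uu n Y) s t - 2 * (uu n Y s t + 2 * lam j) * F j s t) has_field_derivative pt (F j) x t) (at x)"
    using dx dt Ft_rhs_has_x_deriv[OF X xt U j] px_uu[OF X xt t0]
    unfolding field_differentiable_def Yt_rhs_def by (intro conjI; (blast | simp))
qed

section \<open>The map \<open>A\<^sub>k\<close>\<close>

definition A_F :: "nat \<Rightarrow> (nat \<Rightarrow> complex) \<Rightarrow> family \<Rightarrow> family \<Rightarrow> family" where
  "A_F k a Y F = (\<lambda>j x t. if j = k then F k x t - a k / Y k x t else F j x t)"

lemma A_F_same [simp]: "A_F k a Y F k x t = F k x t - a k / Y k x t"
  and A_F_other [simp]: "j \<noteq> k \<Longrightarrow> A_F k a Y F j x t = F j x t"
  by (simp_all add: A_F_def)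

lemma trY_A_map: "trY (\<lambda>x t. A_map k) a Y F = Y"
  by (simp add: fun_eq_iff trY_def A_map_def)

lemma trF_A_map: "trF (\<lambda>x t. A_map k) a Y F = A_F k a Y F"
  by (simp add: fun_eq_iff trF_def A_map_def A_F_def)

lemma ux_rhs_A_F:
  assumes "k \<in> {1..n}" "Y k x t \<noteq> 0"
  shows "ux_rhs n (a(k := - a k)) Y (A_F k a Y F) x t = ux_rhs n a Y F x t"
proof -
  have "(\<Sum>i\<in>{1..n}. 2 * Y i x t * A_F k a Y F i x t - (a(k := - a k)) i)
      = (\<Sum>i\<in>{1..n}. 2 * Y i x t * F i x t - a i)"
    by (rule sum.cong) (use assms in \<open>auto simp: A_F_def field_simps\<close>)
  then show ?thesis by (simp add: ux_rhs_def)
qed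

lemma uxx_rhs_A_F:
  assumes "k \<in> {1..n}" "Y k x t \<noteq> 0"
  shows "uxx_rhs n lam (a(k := - a k)) Y (A_F k a Y F) x t = uxx_rhs n lam a Y F x t"
proof -
  have "2 * ((2 * y * (f - b / y) - - b) * (f - b / y) + y * (u - (f - b / y)\<^sup>2 - l))
      = 2 * ((2 * y * f - b) * f + y * (u - f\<^sup>2 - l))" if "y \<noteq> 0" for y f b u l :: complex
    using that by (simp add: field_simps power2_eq_square)
  then have "(\<Sum>i\<in>{1..n}. 2 * ((2 * Y i x t * A_F k a Y F i x t - (a(k := - a k)) i) * A_F k a Y F i x t
         + Y i x t * (uu n Y x t - (A_F k a Y F i x t)\<^sup>2 - lam i)))
      = (\<Sum>i\<in>{1..n}. 2 * ((2 * Y i x t * F i x t - a i) * F i x t + Y i x t * (uu n Y x t - (F i x t)\<^sup>2 - lam i)))"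
    by (intro sum.cong) (use assms in \<open>auto simp: A_F_def\<close>)
  then show ?thesis by (simp add: uxx_rhs_def)
qed

lemma solves_x_A:
  assumes X: "solves_x n lam a U Y F" and k: "k \<in> {1..n}" and Y0: "\<forall>(x,t)\<in>U. Y k x t \<noteq> 0"
  shows "solves_x n lam (a(k := - a k)) U Y (A_F k a Y F)"
  unfolding solves_x_def
proof (intro ballI, clarify)
  fix j x t assume j: "j \<in> {1..n}" and xt: "(x,t) \<in> U"
  have y0: "Y k x t \<noteq> 0" using Y0 xt by auto
  note dj = solves_xD[OF X j xt] and dk = solves_xD[OF X k xt]
  show "((\<lambda>s. Y j s t) has_field_derivative 2 * Y j x t * A_F k a Y F j x t - (a(k := - a k)) j) (at x) \<and>
        ((\<lambda>s. A_F k a Y F j s t) has_field_derivative uu n Y x t - (A_F k a Y F j x t)\<^sup>2 - lam j) (at x)"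
  proof (cases "j = k")
    case True
    have "2 * Y k x t * (F k x t - a k / Y k x t) - - a k = 2 * Y k x t * F k x t - a k"
      using y0 by (simp add: field_simps)
    moreover have "((\<lambda>s. F k s t - a k / Y k s t) has_field_derivative
        uu n Y x t - (F k x t - a k / Y k x t)\<^sup>2 - lam k) (at x)"
      by (rule derivative_eq_intros dk refl y0)+ (use y0 in \<open>simp add: field_simps power2_eq_square\<close>)
    ultimately show ?thesis using True dk(1) by (simp only: fun_upd_same A_F_same)
  qed (use dj in simp)
qed

lemma solves_xt_A:
  assumes S: "solves_xt n lam a U Y F" and k: "k \<in> {1..n}" and Y0: "\<forall>(x,t)\<in>U. Y k x t \<noteq> 0"
  shows "solves_xt n lam (a(k := - a k)) U Y (A_F k a Y F)"
  unfolding solves_xt_def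
proof (intro conjI solves_x_A[OF solves_xt_solves_x[OF S] k Y0] ballI, clarify)
  fix j x t assume j: "j \<in> {1..n}" and xt: "(x,t) \<in> U"
  have y0: "Y k x t \<noteq> 0" using Y0 xt by auto
  note rhs = ux_rhs_A_F[where Y=Y and x=x and t=t and a=a and F=F, OF k y0]
    uxx_rhs_A_F[where Y=Y and x=x and t=t and a=a and F=F and lam=lam, OF k y0]
  note dj = solves_xtD[OF S j xt] and dk = solves_xtD[OF S k xt]
  show "((\<lambda>s. Y j x s) has_field_derivative Yt_rhs n lam (a(k := - a k)) Y (A_F k a Y F) j x t) (at t) \<and>
        ((\<lambda>s. A_F k a Y F j x s) has_field_derivative Ft_rhs n lam (a(k := - a k)) Y (A_F k a Y F) j x t) (at t)"
  proof (cases "j = k")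
    case True
    have "Yt_rhs n lam (a(k := - a k)) Y (A_F k a Y F) k x t = Yt_rhs n lam a Y F k x t"
      using y0 by (simp add: Yt_rhs_def rhs field_simps)
    moreover have "((\<lambda>s. F k x s - a k / Y k x s) has_field_derivative
        Ft_rhs n lam (a(k := - a k)) Y (A_F k a Y F) k x t) (at t)"
      by (rule derivative_eq_intros dk refl y0)+
         (use y0 in \<open>simp add: Ft_rhs_def Yt_rhs_def rhs field_simps power2_eq_square\<close>)
    ultimately show ?thesis using True dk by simp
  next
    case False
    then show ?thesis using dj by (simp add: Yt_rhs_def Ft_rhs_def rhs)
  qed
qed

lemma A_map_preserves_solutions:
  assumes U: "open U" "\<forall>(x,t)\<in>U. t \<noteq> 0" and S: "is_solution n lam a U Y F" and k: "k \<in> {1..n}"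
    and Y0: "\<forall>(x,t)\<in>U. Y k x t \<noteq> 0"
  shows "is_solution n lam (a(k := - a k)) U (trY (\<lambda>x t. A_map k) a Y F) (trF (\<lambda>x t. A_map k) a Y F)"
  unfolding trY_A_map trF_A_map
  by (rule solves_xt_imp_is_solution[OF U solves_xt_A[OF is_solution_imp_solves_xt[OF U S] k Y0]])

section \<open>The map \<open>B\<^sub>k\<close>\<close>

text \<open>\<open>By_off\<close> is the formula for \<open>y\<^sub>j\<close> with \<open>j \<noteq> k\<close>, \<open>By\<close> and \<open>Bf\<close> are the full new \<open>y\<close> and \<open>f\<close>.
  \<open>Bf\<close> needs no separate case \<open>i = k\<close>: there the quotient is \<open>0 / 0 = 0\<close>, giving \<open>- f k\<close>.\<close>

definition By_off :: "(nat \<Rightarrow> complex) \<Rightarrow> nat \<Rightarrow> (nat \<Rightarrow> complex) \<Rightarrow> (nat \<Rightarrow> complex) \<Rightarrow> (nat \<Rightarrow> complex) \<Rightarrow> nat \<Rightarrow> complex" where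
  "By_off lam k y f a i = (f i - f k) / (lam i - lam k) * ((f i - f k) * y i - a i)"

definition Bf :: "(nat \<Rightarrow> complex) \<Rightarrow> nat \<Rightarrow> (nat \<Rightarrow> complex) \<Rightarrow> nat \<Rightarrow> complex" where
  "Bf lam k f i = - f k - (lam i - lam k) / (f i - f k)"

definition By :: "nat \<Rightarrow> (nat \<Rightarrow> complex) \<Rightarrow> nat \<Rightarrow> complex \<Rightarrow> complex \<Rightarrow> (nat \<Rightarrow> complex) \<Rightarrow> (nat \<Rightarrow> complex) \<Rightarrow> (nat \<Rightarrow> complex) \<Rightarrow> nat \<Rightarrow> complex" where
  "By n lam k x t y f a i = (if i = k
     then - y k + 6 * t * ((f k)\<^sup>2 + lam k) - x - (\<Sum>j\<in>{1..n} - {k}. By_off lam k y f a j + y j)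
     else By_off lam k y f a i)"

lemma Bf_same [simp]: "Bf lam k f k = - f k"
  by (simp add: Bf_def)

lemma By_same: "By n lam k x t y f a k
    = - y k + 6 * t * ((f k)\<^sup>2 + lam k) - x - (\<Sum>j\<in>{1..n} - {k}. By_off lam k y f a j + y j)"
  and By_other: "i \<noteq> k \<Longrightarrow> By n lam k x t y f a i = By_off lam k y f a i"
  by (simp_all add: By_def)

lemma B_map_eq: "B_map n lam k x t (y, f, a) = (By n lam k x t y f a, Bf lam k f, a(k := 1 - a k))"
  unfolding B_map_def Let_def by (simp add: fun_eq_iff By_def By_off_def Bf_def)

lemma B_ok_eq: "B_ok n k (y, f, a) \<longleftrightarrow> (\<forall>i\<in>{1..n} - {k}. f i \<noteq> f k)"
  by (simp add: B_ok_def)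

definition B_Y :: "nat \<Rightarrow> (nat \<Rightarrow> complex) \<Rightarrow> nat \<Rightarrow> (nat \<Rightarrow> complex) \<Rightarrow> family \<Rightarrow> family \<Rightarrow> family" where
  "B_Y n lam k a Y F = (\<lambda>j x t. By n lam k x t (\<lambda>i. Y i x t) (\<lambda>i. F i x t) a j)"

definition B_F :: "(nat \<Rightarrow> complex) \<Rightarrow> nat \<Rightarrow> family \<Rightarrow> family" where
  "B_F lam k F = (\<lambda>j x t. Bf lam k (\<lambda>i. F i x t) j)"

lemma B_Y_apply: "B_Y n lam k a Y F j x t = By n lam k x t (\<lambda>i. Y i x t) (\<lambda>i. F i x t) a j"
  and B_F_apply: "B_F lam k F j x t = Bf lam k (\<lambda>i. F i x t) j"
  by (simp_all add: B_Y_def B_F_def)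

lemma trY_B_map: "trY (B_map n lam k) a Y F = B_Y n lam k a Y F"
  by (simp add: fun_eq_iff trY_def B_Y_def B_map_eq)

lemma trF_B_map: "trF (B_map n lam k) a Y F = B_F lam k F"
  by (simp add: fun_eq_iff trF_def B_F_def B_map_eq)

subsection \<open>Rational identities behind the \<open>x\<close>- and \<open>t\<close>-equations\<close>

context
  fixes fi fk yi ai li lk u ux uxx :: complex
  assumes D: "fi \<noteq> fk" and L: "li \<noteq> lk"
begin

private lemma iD: "inverse (fi - fk) * (fi - fk) = 1" and iL: "inverse (li - lk) * (li - lk) = 1"
  using D L by simp_all

lemma By_off_x_identity:
  "((u - fi\<^sup>2 - li) - (u - fk\<^sup>2 - lk)) / (li - lk) * ((fi - fk) * yi - ai)
     + (fi - fk) / (li - lk) * (((u - fi\<^sup>2 - li) - (u - fk\<^sup>2 - lk)) * yi + (fi - fk) * (2 * yi * fi - ai))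
   = 2 * ((fi - fk) / (li - lk) * ((fi - fk) * yi - ai)) * (- fk - (li - lk) / (fi - fk)) - ai"
  unfolding divide_inverse power2_eq_square using iD iL by algebra

lemma Bf_x_identity:
  "- (u - fk\<^sup>2 - lk) + (li - lk) * ((u - fi\<^sup>2 - li) - (u - fk\<^sup>2 - lk)) / (fi - fk)\<^sup>2
   = (- u + 2 * fk\<^sup>2 + 2 * lk) - (- fk - (li - lk) / (fi - fk))\<^sup>2 - li"
  unfolding divide_inverse power2_eq_square inverse_mult_distrib using iD iL by algebra

lemma By_off_x_sum_identity:
  "(2 * ((fi - fk) / (li - lk) * ((fi - fk) * yi - ai)) * (- fk - (li - lk) / (fi - fk)) - ai) + (2 * yi * fi - ai)
   = - 2 * fk * ((fi - fk) / (li - lk) * ((fi - fk) * yi - ai)) + 2 * fk * yi"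
  unfolding divide_inverse power2_eq_square using iD iL by algebra

lemma By_off_t_identity:
  "let Dt = (uxx - 2 * (ux * fi + (u + 2 * li) * (u - fi\<^sup>2 - li))) - (uxx - 2 * (ux * fk + (u + 2 * lk) * (u - fk\<^sup>2 - lk)));
       yit = 2 * ux * yi - 2 * (u + 2 * li) * (2 * yi * fi - ai);
       uB = - u + 2 * fk\<^sup>2 + 2 * lk; uxB = - ux + 4 * fk * (u - fk\<^sup>2 - lk);
       yB = (fi - fk) / (li - lk) * ((fi - fk) * yi - ai); fB = - fk - (li - lk) / (fi - fk)
   in Dt / (li - lk) * ((fi - fk) * yi - ai) + (fi - fk) / (li - lk) * (Dt * yi + (fi - fk) * yit)
      = 2 * uxB * yB - 2 * (uB + 2 * li) * (2 * yB * fB - ai)"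
  unfolding Let_def divide_inverse power2_eq_square using iD iL by algebra

lemma Bf_t_identity:
  "let Dt = (uxx - 2 * (ux * fi + (u + 2 * li) * (u - fi\<^sup>2 - li))) - (uxx - 2 * (ux * fk + (u + 2 * lk) * (u - fk\<^sup>2 - lk)));
       fkt = uxx - 2 * (ux * fk + (u + 2 * lk) * (u - fk\<^sup>2 - lk));
       uB = - u + 2 * fk\<^sup>2 + 2 * lk; uxB = - ux + 4 * fk * (u - fk\<^sup>2 - lk);
       uxxB = - uxx + 4 * ((u - fk\<^sup>2 - lk)\<^sup>2 + fk * (ux - 2 * fk * (u - fk\<^sup>2 - lk)));
       fB = - fk - (li - lk) / (fi - fk)
   in - fkt + (li - lk) * Dt / (fi - fk)\<^sup>2 = uxxB - 2 * (uxB * fB + (uB + 2 * li) * (uB - fB\<^sup>2 - li))"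
  unfolding Let_def divide_inverse power2_eq_square inverse_mult_distrib using iD iL by algebra

lemma By_off_t_sum_identity:
  "let uB = - u + 2 * fk\<^sup>2 + 2 * lk; uxB = - ux + 4 * fk * (u - fk\<^sup>2 - lk);
       yB = (fi - fk) / (li - lk) * ((fi - fk) * yi - ai); fB = - fk - (li - lk) / (fi - fk)
   in 2 * uxB * yB - 2 * (uB + 2 * li) * (2 * yB * fB - ai)
      = 2 * uxB * yB + 4 * (uB + 2 * lk) * fk * yB
        + 2 * (4 * fk * (fi - fk) * ((fi - fk) * yi - ai) + ((uB + 2 * lk) + 2 * (li - lk)) * (2 * (fi - fk) * yi - ai))"
  unfolding Let_def divide_inverse power2_eq_square using iD iL by algebra

end

lemma Bf_same_t_identity:
  fixes fk lk u ux uxx :: complex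
  shows "- (uxx - 2 * (ux * fk + (u + 2 * lk) * (u - fk\<^sup>2 - lk)))
    = (- uxx + 4 * ((u - fk\<^sup>2 - lk)\<^sup>2 + fk * (ux - 2 * fk * (u - fk\<^sup>2 - lk))))
      - 2 * ((- ux + 4 * fk * (u - fk\<^sup>2 - lk)) * (- fk)
             + ((- u + 2 * fk\<^sup>2 + 2 * lk) + 2 * lk) * ((- u + 2 * fk\<^sup>2 + 2 * lk) - (- fk)\<^sup>2 - lk))"
  by algebra

lemma uu_B_identity:
  fixes t x u Y F la Q B1 :: complex
  assumes t: "t \<noteq> 0" and hu: "u = x / (6 * t) + (1 / (3 * t)) * (Y + B1)"
  shows "x / (6 * t) + (1 / (3 * t)) * ((- Y + 6 * t * (F\<^sup>2 + la) - x - (Q + B1)) + Q) = - u + 2 * F\<^sup>2 + 2 * la"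
proof -
  have hx: "x = 6 * t * u - 2 * Y - 2 * B1" using t unfolding hu by (simp add: field_simps)
  show ?thesis unfolding hx using t by (simp add: field_simps)
qed

lemma By_same_x_identity:
  fixes t x u Y F la Q B1 al :: complex
  assumes t: "t \<noteq> 0" and hu: "u = x / (6 * t) + (1 / (3 * t)) * (Y + B1)"
  shows "- (2 * Y * F - al) + 6 * t * (2 * F * (u - F\<^sup>2 - la)) - 1 - (- 2 * F * Q + 2 * F * B1)
    = 2 * (- Y + 6 * t * (F\<^sup>2 + la) - x - (Q + B1)) * (- F) - (1 - al)"
proof -
  have hx: "x = 6 * t * u - 2 * Y - 2 * B1" using t unfolding hu by (simp add: field_simps)
  show ?thesis unfolding hx by algebra
qed

text \<open>The \<open>B\<^sub>i\<close> stand for the power sums over \<open>i \<noteq> k\<close> of \<open>y\<^sub>i, f\<^sub>i y\<^sub>i, \<alpha>\<^sub>i, f\<^sub>i\<^sup>2 y\<^sub>i, f\<^sub>i \<alpha>\<^sub>i, \<lambda>\<^sub>i y\<^sub>i, \<lambda>\<^sub>i f\<^sub>i y\<^sub>i, \<lambda>\<^sub>i \<alpha>\<^sub>i\<close>.\<close>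
lemma By_same_t_identity:
  fixes t x u ux uxx Y F al la Q B1 B2 B3 B4 B5 B6 B7 B8 :: complex
  assumes t: "t \<noteq> 0"
    and hu: "u = x / (6 * t) + (1 / (3 * t)) * (Y + B1)"
    and hux: "ux = 1 / (6 * t) + (1 / (3 * t)) * ((2 * Y * F - al) + (2 * B2 - B3))"
    and huxx: "uxx = (1 / (3 * t)) * (2 * ((2 * Y * F - al) * F + Y * (u - F\<^sup>2 - la)) + 2 * (B4 - B5 + u * B1 - B6))"
  shows "let Ytk = 2 * ux * Y - 2 * (u + 2 * la) * (2 * Y * F - al);
       Ftk = uxx - 2 * (ux * F + (u + 2 * la) * (u - F\<^sup>2 - la));
       uB = - u + 2 * F\<^sup>2 + 2 * la; uxB = - ux + 4 * F * (u - F\<^sup>2 - la); W = uB + 2 * la;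
       S4 = 2 * (4 * F * (B4 - 2 * F * B2 + F\<^sup>2 * B1 - B5 + F * B3) + W * (2 * B2 - 2 * F * B1 - B3)
            + 2 * (2 * B7 - 2 * F * B6 - B8 - la * (2 * B2 - 2 * F * B1 - B3)));
       SYt = 2 * ux * B1 - 2 * u * (2 * B2 - B3) - 4 * (2 * B7 - B8);
       YBk = - Y + 6 * t * (F\<^sup>2 + la) - x - (Q + B1)
   in - Ytk + 6 * (F\<^sup>2 + la) + 6 * t * (2 * F * Ftk) - ((2 * uxB + 4 * W * F) * Q + S4 + SYt)
      = 2 * uxB * YBk - 2 * (uB + 2 * la) * (2 * YBk * (- F) - (1 - al))"
proof -
  have hx: "x = 6 * t * u - 2 * Y - 2 * B1" using t unfolding hu by (simp add: field_simps)
  have ux: "ux = (1 + 2 * (2 * Y * F - al) + 4 * B2 - 2 * B3) / (6 * t)"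
    using t unfolding hux by (simp add: field_simps)
  have uxx: "uxx = (2 * ((2 * Y * F - al) * F + Y * (u - F\<^sup>2 - la)) + 2 * (B4 - B5 + u * B1 - B6)) / (3 * t)"
    using t unfolding huxx by (simp add: field_simps)
  show ?thesis unfolding Let_def ux uxx hx using t
    by (simp add: field_simps) (simp add: algebra_simps power2_eq_square power3_eq_cube)
qed

lemma sum_By_off_t_remainder:
  fixes f y a l :: "nat \<Rightarrow> complex" and S :: "nat set" and fk W lk :: complex
  shows "(\<Sum>i\<in>S. 2 * (4 * fk * (f i - fk) * ((f i - fk) * y i - a i) + (W + 2 * (l i - lk)) * (2 * (f i - fk) * y i - a i)))
   = 2 * (4 * fk * ((\<Sum>i\<in>S. (f i)\<^sup>2 * y i) - 2 * fk * (\<Sum>i\<in>S. f i * y i) + fk\<^sup>2 * (\<Sum>i\<in>S. y i)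
          - (\<Sum>i\<in>S. f i * a i) + fk * (\<Sum>i\<in>S. a i))
      + W * (2 * (\<Sum>i\<in>S. f i * y i) - 2 * fk * (\<Sum>i\<in>S. y i) - (\<Sum>i\<in>S. a i))
      + 2 * (2 * (\<Sum>i\<in>S. l i * f i * y i) - 2 * fk * (\<Sum>i\<in>S. l i * y i) - (\<Sum>i\<in>S. l i * a i)
             - lk * (2 * (\<Sum>i\<in>S. f i * y i) - 2 * fk * (\<Sum>i\<in>S. y i) - (\<Sum>i\<in>S. a i))))"
proof (induct S rule: infinite_finite_induct)
  case (insert i S)
  show ?case unfolding sum.insert[OF insert(1,2)] using insert(3) by algebra
qed simp_all

lemma sum_Yt_rhs_expand:
  fixes f y a l :: "nat \<Rightarrow> complex" and S :: "nat set" and u ux :: complex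
  shows "(\<Sum>i\<in>S. 2 * ux * y i - 2 * (u + 2 * l i) * (2 * y i * f i - a i))
   = 2 * ux * (\<Sum>i\<in>S. y i) - 2 * u * (2 * (\<Sum>i\<in>S. f i * y i) - (\<Sum>i\<in>S. a i))
     - 4 * (2 * (\<Sum>i\<in>S. l i * f i * y i) - (\<Sum>i\<in>S. l i * a i))"
proof (induct S rule: infinite_finite_induct)
  case (insert i S)
  show ?case unfolding sum.insert[OF insert(1,2)] using insert(3) by algebra
qed simp_all

lemma sum_uxx_summand_expand:
  fixes f y a l :: "nat \<Rightarrow> complex" and S :: "nat set" and u :: complex
  shows "(\<Sum>i\<in>S. 2 * ((2 * y i * f i - a i) * f i + y i * (u - (f i)\<^sup>2 - l i)))
   = 2 * ((\<Sum>i\<in>S. (f i)\<^sup>2 * y i) - (\<Sum>i\<in>S. f i * a i) + u * (\<Sum>i\<in>S. y i) - (\<Sum>i\<in>S. l i * y i))"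
proof (induct S rule: infinite_finite_induct)
  case (insert i S)
  show ?case unfolding sum.insert[OF insert(1,2)] using insert(3) by algebra
qed simp_all

lemma sum_ux_summand_expand:
  fixes f y a :: "nat \<Rightarrow> complex" and S :: "nat set"
  shows "(\<Sum>i\<in>S. 2 * y i * f i - a i) = 2 * (\<Sum>i\<in>S. f i * y i) - (\<Sum>i\<in>S. a i)"
  by (simp add: algebra_simps sum.distrib sum_subtractf sum_distrib_left)

lemma uu_remove: "k \<in> {1..n} \<Longrightarrow> uu n Y x t = x / (6 * t) + (1 / (3 * t)) * (Y k x t + (\<Sum>i\<in>{1..n} - {k}. Y i x t))"
  unfolding uu_def by (simp add: sum.remove)

lemma ux_rhs_remove: "k \<in> {1..n} \<Longrightarrow> ux_rhs n a Y F x t = 1 / (6 * t) + (1 / (3 * t)) * ((2 * Y k x t * F k x t - a k)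
    + (2 * (\<Sum>i\<in>{1..n} - {k}. F i x t * Y i x t) - (\<Sum>i\<in>{1..n} - {k}. a i)))"
  unfolding ux_rhs_def
  by (simp add: sum.remove sum_ux_summand_expand[where y = "\<lambda>i. Y i x t" and f = "\<lambda>i. F i x t"])

lemma uxx_rhs_remove:
  assumes "k \<in> {1..n}"
  shows "uxx_rhs n lam a Y F x t
  = (1 / (3 * t)) * (2 * ((2 * Y k x t * F k x t - a k) * F k x t + Y k x t * (uu n Y x t - (F k x t)\<^sup>2 - lam k))
    + 2 * ((\<Sum>i\<in>{1..n} - {k}. (F i x t)\<^sup>2 * Y i x t) - (\<Sum>i\<in>{1..n} - {k}. F i x t * a i)
           + uu n Y x t * (\<Sum>i\<in>{1..n} - {k}. Y i x t) - (\<Sum>i\<in>{1..n} - {k}. lam i * Y i x t)))"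
  unfolding uxx_rhs_def
  by (subst sum.remove[OF finite_atLeastAtMost assms],
      subst sum_uxx_summand_expand[where y = "\<lambda>i. Y i x t" and f = "\<lambda>i. F i x t" and S = "{1..n} - {k}"]) simp

lemma By_off_has_x_deriv:
  assumes X: "solves_x n lam a U Y F" and xt: "(x,t) \<in> U" and i: "i \<in> {1..n}" and k: "k \<in> {1..n}"
    and D: "F i x t \<noteq> F k x t" and L: "lam i \<noteq> lam k"
  shows "((\<lambda>s. By_off lam k (\<lambda>l. Y l s t) (\<lambda>l. F l s t) a i) has_field_derivative
      2 * By_off lam k (\<lambda>l. Y l x t) (\<lambda>l. F l x t) a i * Bf lam k (\<lambda>l. F l x t) i - a i) (at x)"
proof -
  note di = solves_xD[OF X i xt] and dk = solves_xD[OF X k xt]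
  have L': "lam i - lam k \<noteq> 0" and iL: "inverse (lam i - lam k) * (lam i - lam k) = 1" using L by simp_all
  have "((\<lambda>s. By_off lam k (\<lambda>l. Y l s t) (\<lambda>l. F l s t) a i) has_field_derivative
     ((uu n Y x t - (F i x t)\<^sup>2 - lam i) - (uu n Y x t - (F k x t)\<^sup>2 - lam k)) / (lam i - lam k) * ((F i x t - F k x t) * Y i x t - a i)
     + (F i x t - F k x t) / (lam i - lam k) * (((uu n Y x t - (F i x t)\<^sup>2 - lam i) - (uu n Y x t - (F k x t)\<^sup>2 - lam k)) * Y i x t
         + (F i x t - F k x t) * (2 * Y i x t * F i x t - a i))) (at x)"
    unfolding By_off_def
    by (rule derivative_eq_intros di dk refl L')+
       (simp add: divide_inverse power2_eq_square inverse_mult_distrib, insert iL, algebra)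
  then show ?thesis unfolding By_off_def Bf_def By_off_x_identity[OF D L] .
qed

lemma Bf_has_x_deriv:
  assumes X: "solves_x n lam a U Y F" and xt: "(x,t) \<in> U" and i: "i \<in> {1..n}" and k: "k \<in> {1..n}"
    and D: "F i x t \<noteq> F k x t" and L: "lam i \<noteq> lam k"
  shows "((\<lambda>s. Bf lam k (\<lambda>l. F l s t) i) has_field_derivative
      (- uu n Y x t + 2 * (F k x t)\<^sup>2 + 2 * lam k) - (Bf lam k (\<lambda>l. F l x t) i)\<^sup>2 - lam i) (at x)"
proof -
  note di = solves_xD[OF X i xt] and dk = solves_xD[OF X k xt]
  have D': "F i x t - F k x t \<noteq> 0" using D by simp
  have "((\<lambda>s. Bf lam k (\<lambda>l. F l s t) i) has_field_derivative
     - (uu n Y x t - (F k x t)\<^sup>2 - lam k)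
     + (lam i - lam k) * ((uu n Y x t - (F i x t)\<^sup>2 - lam i) - (uu n Y x t - (F k x t)\<^sup>2 - lam k)) / (F i x t - F k x t)\<^sup>2) (at x)"
    unfolding Bf_def
    by (rule derivative_eq_intros di dk refl D')+ (use D' in \<open>simp add: divide_inverse power2_eq_square inverse_mult_distrib\<close>)
  then show ?thesis unfolding Bf_def Bf_x_identity[OF D L] .
qed

lemma By_off_has_t_deriv:
  assumes S: "solves_xt n lam a U Y F" and xt: "(x,t) \<in> U" and i: "i \<in> {1..n}" and k: "k \<in> {1..n}"
    and D: "F i x t \<noteq> F k x t" and L: "lam i \<noteq> lam k"
  shows "((\<lambda>s. By_off lam k (\<lambda>l. Y l x s) (\<lambda>l. F l x s) a i) has_field_derivative
     2 * (- ux_rhs n a Y F x t + 4 * F k x t * (uu n Y x t - (F k x t)\<^sup>2 - lam k)) * By_off lam k (\<lambda>l. Y l x t) (\<lambda>l. F l x t) a i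
     - 2 * ((- uu n Y x t + 2 * (F k x t)\<^sup>2 + 2 * lam k) + 2 * lam i)
         * (2 * By_off lam k (\<lambda>l. Y l x t) (\<lambda>l. F l x t) a i * Bf lam k (\<lambda>l. F l x t) i - a i)) (at t)"
proof -
  note di = solves_xtD[OF S i xt] and dk = solves_xtD[OF S k xt]
  have L': "lam i - lam k \<noteq> 0" and iL: "inverse (lam i - lam k) * (lam i - lam k) = 1" using L by simp_all
  have "((\<lambda>s. By_off lam k (\<lambda>l. Y l x s) (\<lambda>l. F l x s) a i) has_field_derivative
     (Ft_rhs n lam a Y F i x t - Ft_rhs n lam a Y F k x t) / (lam i - lam k) * ((F i x t - F k x t) * Y i x t - a i)
     + (F i x t - F k x t) / (lam i - lam k) * ((Ft_rhs n lam a Y F i x t - Ft_rhs n lam a Y F k x t) * Y i x t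
         + (F i x t - F k x t) * Yt_rhs n lam a Y F i x t)) (at t)"
    unfolding By_off_def
    by (rule derivative_eq_intros di dk refl L')+
       (simp add: divide_inverse power2_eq_square inverse_mult_distrib, insert iL, algebra)
  then show ?thesis
    unfolding Ft_rhs_def Yt_rhs_def By_off_def Bf_def By_off_t_identity[OF D L, unfolded Let_def] .
qed

lemma Bf_has_t_deriv:
  assumes S: "solves_xt n lam a U Y F" and xt: "(x,t) \<in> U" and i: "i \<in> {1..n}" and k: "k \<in> {1..n}"
    and D: "F i x t \<noteq> F k x t" and L: "lam i \<noteq> lam k"
  shows "((\<lambda>s. Bf lam k (\<lambda>l. F l x s) i) has_field_derivative
     (- uxx_rhs n lam a Y F x t + 4 * ((uu n Y x t - (F k x t)\<^sup>2 - lam k)\<^sup>2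
        + F k x t * (ux_rhs n a Y F x t - 2 * F k x t * (uu n Y x t - (F k x t)\<^sup>2 - lam k))))
     - 2 * ((- ux_rhs n a Y F x t + 4 * F k x t * (uu n Y x t - (F k x t)\<^sup>2 - lam k)) * Bf lam k (\<lambda>l. F l x t) i
        + ((- uu n Y x t + 2 * (F k x t)\<^sup>2 + 2 * lam k) + 2 * lam i)
          * ((- uu n Y x t + 2 * (F k x t)\<^sup>2 + 2 * lam k) - (Bf lam k (\<lambda>l. F l x t) i)\<^sup>2 - lam i))) (at t)"
proof -
  note di = solves_xtD[OF S i xt] and dk = solves_xtD[OF S k xt]
  have D': "F i x t - F k x t \<noteq> 0" using D by simp
  have "((\<lambda>s. Bf lam k (\<lambda>l. F l x s) i) has_field_derivative
     - Ft_rhs n lam a Y F k x t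
     + (lam i - lam k) * (Ft_rhs n lam a Y F i x t - Ft_rhs n lam a Y F k x t) / (F i x t - F k x t)\<^sup>2) (at t)"
    unfolding Bf_def
    by (rule derivative_eq_intros di dk refl D')+ (use D' in \<open>simp add: divide_inverse power2_eq_square inverse_mult_distrib\<close>)
  then show ?thesis unfolding Ft_rhs_def Bf_def Bf_t_identity[OF D L, unfolded Let_def] .
qed

lemma uu_B_Y:
  assumes k: "k \<in> {1..n}" and t: "t \<noteq> 0"
  shows "uu n (B_Y n lam k a Y F) x t = - uu n Y x t + 2 * (F k x t)\<^sup>2 + 2 * lam k"
proof -
  let ?yB = "\<lambda>i. By_off lam k (\<lambda>l. Y l x t) (\<lambda>l. F l x t) a i"
  have "(\<Sum>i\<in>{1..n} - {k}. B_Y n lam k a Y F i x t) = (\<Sum>i\<in>{1..n} - {k}. ?yB i)"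
    by (rule sum.cong) (auto simp: B_Y_def By_other)
  then have "uu n (B_Y n lam k a Y F) x t = x / (6 * t) + (1 / (3 * t))
      * ((- Y k x t + 6 * t * ((F k x t)\<^sup>2 + lam k) - x - ((\<Sum>i\<in>{1..n} - {k}. ?yB i) + (\<Sum>i\<in>{1..n} - {k}. Y i x t)))
         + (\<Sum>i\<in>{1..n} - {k}. ?yB i))"
    unfolding uu_remove[OF k, of "B_Y n lam k a Y F"] by (simp add: B_Y_def By_same sum.distrib)
  also have "\<dots> = - uu n Y x t + 2 * (F k x t)\<^sup>2 + 2 * lam k"
    by (rule uu_B_identity[OF t uu_remove[OF k]])
  finally show ?thesis .
qed

lemma By_same_has_x_deriv:
  assumes X: "solves_x n lam a U Y F" and xt: "(x,t) \<in> U" and k: "k \<in> {1..n}" and t: "t \<noteq> 0"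
    and D: "\<forall>i\<in>{1..n} - {k}. F i x t \<noteq> F k x t" and L: "\<forall>i\<in>{1..n} - {k}. lam i \<noteq> lam k"
  shows "((\<lambda>s. By n lam k s t (\<lambda>l. Y l s t) (\<lambda>l. F l s t) a k) has_field_derivative
      2 * By n lam k x t (\<lambda>l. Y l x t) (\<lambda>l. F l x t) a k * (- F k x t) - (1 - a k)) (at x)"
proof -
  let ?S = "{1..n} - {k}"
  let ?yB = "\<lambda>i s. By_off lam k (\<lambda>l. Y l s t) (\<lambda>l. F l s t) a i"
  have sum_deriv: "((\<lambda>s. \<Sum>i\<in>?S. ?yB i s + Y i s t) has_field_derivative
      (\<Sum>i\<in>?S. (2 * ?yB i x * Bf lam k (\<lambda>l. F l x t) i - a i) + (2 * Y i x t * F i x t - a i))) (at x)"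
  proof (rule DERIV_sum)
    fix i assume i: "i \<in> ?S"
    then have i': "i \<in> {1..n}" by auto
    show "((\<lambda>s. ?yB i s + Y i s t) has_field_derivative
        (2 * ?yB i x * Bf lam k (\<lambda>l. F l x t) i - a i) + (2 * Y i x t * F i x t - a i)) (at x)"
      using D L i by (intro DERIV_add By_off_has_x_deriv[OF X xt i' k] solves_xD(1)[OF X i' xt]) auto
  qed
  have sum_eq: "(\<Sum>i\<in>?S. (2 * ?yB i x * Bf lam k (\<lambda>l. F l x t) i - a i) + (2 * Y i x t * F i x t - a i))
      = - 2 * F k x t * (\<Sum>i\<in>?S. ?yB i x) + 2 * F k x t * (\<Sum>i\<in>?S. Y i x t)"
  proof -
    have "(2 * ?yB i x * Bf lam k (\<lambda>l. F l x t) i - a i) + (2 * Y i x t * F i x t - a i)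
        = - 2 * F k x t * ?yB i x + 2 * F k x t * Y i x t" if "i \<in> ?S" for i
      using D L that unfolding By_off_def Bf_def by (intro By_off_x_sum_identity) auto
    then have "(\<Sum>i\<in>?S. (2 * ?yB i x * Bf lam k (\<lambda>l. F l x t) i - a i) + (2 * Y i x t * F i x t - a i))
        = (\<Sum>i\<in>?S. - 2 * F k x t * ?yB i x + 2 * F k x t * Y i x t)"
      by (rule sum.cong[OF refl])
    then show ?thesis by (simp only: sum.distrib sum_distrib_left)
  qed
  have "((\<lambda>s. - Y k s t + 6 * t * ((F k s t)\<^sup>2 + lam k) - s - (\<Sum>i\<in>?S. ?yB i s + Y i s t))
      has_field_derivative - (2 * Y k x t * F k x t - a k) + 6 * t * (2 * F k x t * (uu n Y x t - (F k x t)\<^sup>2 - lam k))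
        - 1 - (- 2 * F k x t * (\<Sum>i\<in>?S. ?yB i x) + 2 * F k x t * (\<Sum>i\<in>?S. Y i x t))) (at x)"
    unfolding sum_eq[symmetric]
    by (rule sum_deriv derivative_eq_intros solves_xD[OF X k xt] refl)+ (simp add: algebra_simps)
  also have "- (2 * Y k x t * F k x t - a k) + 6 * t * (2 * F k x t * (uu n Y x t - (F k x t)\<^sup>2 - lam k))
        - 1 - (- 2 * F k x t * (\<Sum>i\<in>?S. ?yB i x) + 2 * F k x t * (\<Sum>i\<in>?S. Y i x t))
      = 2 * (- Y k x t + 6 * t * ((F k x t)\<^sup>2 + lam k) - x - ((\<Sum>i\<in>?S. ?yB i x) + (\<Sum>i\<in>?S. Y i x t)))
          * (- F k x t) - (1 - a k)"
    by (rule By_same_x_identity[OF t uu_remove[OF k]])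
  finally show ?thesis unfolding By_same sum.distrib .
qed

lemma sum_By_off_has_t_deriv:
  assumes S: "solves_xt n lam a U Y F" and xt: "(x,t) \<in> U" and k: "k \<in> {1..n}"
    and D: "\<forall>i\<in>{1..n} - {k}. F i x t \<noteq> F k x t" and L: "\<forall>i\<in>{1..n} - {k}. lam i \<noteq> lam k"
  shows "((\<lambda>s. \<Sum>i\<in>{1..n} - {k}. By_off lam k (\<lambda>l. Y l x s) (\<lambda>l. F l x s) a i + Y i x s) has_field_derivative
      (2 * (- ux_rhs n a Y F x t + 4 * F k x t * (uu n Y x t - (F k x t)\<^sup>2 - lam k))
        + 4 * ((- uu n Y x t + 2 * (F k x t)\<^sup>2 + 2 * lam k) + 2 * lam k) * F k x t)
        * (\<Sum>i\<in>{1..n} - {k}. By_off lam k (\<lambda>l. Y l x t) (\<lambda>l. F l x t) a i)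
      + (\<Sum>i\<in>{1..n} - {k}. 2 * (4 * F k x t * (F i x t - F k x t) * ((F i x t - F k x t) * Y i x t - a i)
          + (((- uu n Y x t + 2 * (F k x t)\<^sup>2 + 2 * lam k) + 2 * lam k) + 2 * (lam i - lam k))
            * (2 * (F i x t - F k x t) * Y i x t - a i)))
      + (\<Sum>i\<in>{1..n} - {k}. Yt_rhs n lam a Y F i x t)) (at t)"
proof -
  let ?S = "{1..n} - {k}"
  let ?uxB = "- ux_rhs n a Y F x t + 4 * F k x t * (uu n Y x t - (F k x t)\<^sup>2 - lam k)"
  let ?uB = "- uu n Y x t + 2 * (F k x t)\<^sup>2 + 2 * lam k"
  let ?yB = "\<lambda>i. By_off lam k (\<lambda>l. Y l x t) (\<lambda>l. F l x t) a i"
  let ?yBt = "\<lambda>i. 2 * ?uxB * ?yB i - 2 * (?uB + 2 * lam i) * (2 * ?yB i * Bf lam k (\<lambda>l. F l x t) i - a i)"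
  let ?G = "\<lambda>i. 2 * (4 * F k x t * (F i x t - F k x t) * ((F i x t - F k x t) * Y i x t - a i)
     + ((?uB + 2 * lam k) + 2 * (lam i - lam k)) * (2 * (F i x t - F k x t) * Y i x t - a i))"
  have deriv: "((\<lambda>s. \<Sum>i\<in>?S. By_off lam k (\<lambda>l. Y l x s) (\<lambda>l. F l x s) a i + Y i x s) has_field_derivative
      (\<Sum>i\<in>?S. ?yBt i + Yt_rhs n lam a Y F i x t)) (at t)"
  proof (rule DERIV_sum)
    fix i assume i: "i \<in> ?S"
    then have i': "i \<in> {1..n}" by auto
    show "((\<lambda>s. By_off lam k (\<lambda>l. Y l x s) (\<lambda>l. F l x s) a i + Y i x s) has_field_derivative
        ?yBt i + Yt_rhs n lam a Y F i x t) (at t)"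
      using D L i by (intro DERIV_add By_off_has_t_deriv[OF S xt i' k] solves_xtD(1)[OF S i' xt]) auto
  qed
  have "?yBt i = 2 * ?uxB * ?yB i + 4 * (?uB + 2 * lam k) * F k x t * ?yB i + ?G i" if "i \<in> ?S" for i
    using D L that unfolding By_off_def Bf_def by (intro By_off_t_sum_identity[unfolded Let_def]) auto
  then have "(\<Sum>i\<in>?S. ?yBt i + Yt_rhs n lam a Y F i x t)
      = (\<Sum>i\<in>?S. (2 * ?uxB + 4 * (?uB + 2 * lam k) * F k x t) * ?yB i + ?G i + Yt_rhs n lam a Y F i x t)"
    by (intro sum.cong) (simp_all add: algebra_simps)
  also have "\<dots> = (2 * ?uxB + 4 * (?uB + 2 * lam k) * F k x t) * (\<Sum>i\<in>?S. ?yB i)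
      + (\<Sum>i\<in>?S. ?G i) + (\<Sum>i\<in>?S. Yt_rhs n lam a Y F i x t)"
    by (simp only: sum.distrib sum_distrib_left)
  finally show ?thesis using deriv by simp
qed

lemma By_same_has_t_deriv:
  assumes S: "solves_xt n lam a U Y F" and xt: "(x,t) \<in> U" and k: "k \<in> {1..n}" and t: "t \<noteq> 0"
    and D: "\<forall>i\<in>{1..n} - {k}. F i x t \<noteq> F k x t" and L: "\<forall>i\<in>{1..n} - {k}. lam i \<noteq> lam k"
  shows "((\<lambda>s. By n lam k x s (\<lambda>l. Y l x s) (\<lambda>l. F l x s) a k) has_field_derivative
    2 * (- ux_rhs n a Y F x t + 4 * F k x t * (uu n Y x t - (F k x t)\<^sup>2 - lam k)) * By n lam k x t (\<lambda>l. Y l x t) (\<lambda>l. F l x t) a k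
    - 2 * ((- uu n Y x t + 2 * (F k x t)\<^sup>2 + 2 * lam k) + 2 * lam k)
        * (2 * By n lam k x t (\<lambda>l. Y l x t) (\<lambda>l. F l x t) a k * (- F k x t) - (1 - a k))) (at t)"
proof -
  let ?S = "{1..n} - {k}"
  let ?uxB = "- ux_rhs n a Y F x t + 4 * F k x t * (uu n Y x t - (F k x t)\<^sup>2 - lam k)"
  let ?uB = "- uu n Y x t + 2 * (F k x t)\<^sup>2 + 2 * lam k"
  let ?yB = "\<lambda>i. By_off lam k (\<lambda>l. Y l x t) (\<lambda>l. F l x t) a i"
  let ?G = "\<lambda>i. 2 * (4 * F k x t * (F i x t - F k x t) * ((F i x t - F k x t) * Y i x t - a i)
     + ((?uB + 2 * lam k) + 2 * (lam i - lam k)) * (2 * (F i x t - F k x t) * Y i x t - a i))"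
  let ?D = "(2 * ?uxB + 4 * (?uB + 2 * lam k) * F k x t) * (\<Sum>i\<in>?S. ?yB i) + (\<Sum>i\<in>?S. ?G i)
      + (\<Sum>i\<in>?S. Yt_rhs n lam a Y F i x t)"
  have G_eq: "(\<Sum>i\<in>?S. ?G i) = 2 * (4 * F k x t * ((\<Sum>i\<in>?S. (F i x t)\<^sup>2 * Y i x t)
        - 2 * F k x t * (\<Sum>i\<in>?S. F i x t * Y i x t) + (F k x t)\<^sup>2 * (\<Sum>i\<in>?S. Y i x t)
        - (\<Sum>i\<in>?S. F i x t * a i) + F k x t * (\<Sum>i\<in>?S. a i))
      + (?uB + 2 * lam k) * (2 * (\<Sum>i\<in>?S. F i x t * Y i x t) - 2 * F k x t * (\<Sum>i\<in>?S. Y i x t) - (\<Sum>i\<in>?S. a i))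
      + 2 * (2 * (\<Sum>i\<in>?S. lam i * F i x t * Y i x t) - 2 * F k x t * (\<Sum>i\<in>?S. lam i * Y i x t)
        - (\<Sum>i\<in>?S. lam i * a i) - lam k * (2 * (\<Sum>i\<in>?S. F i x t * Y i x t)
        - 2 * F k x t * (\<Sum>i\<in>?S. Y i x t) - (\<Sum>i\<in>?S. a i))))"
    by (rule sum_By_off_t_remainder)
  have Yt_eq: "(\<Sum>i\<in>?S. Yt_rhs n lam a Y F i x t) = 2 * ux_rhs n a Y F x t * (\<Sum>i\<in>?S. Y i x t)
      - 2 * uu n Y x t * (2 * (\<Sum>i\<in>?S. F i x t * Y i x t) - (\<Sum>i\<in>?S. a i))
      - 4 * (2 * (\<Sum>i\<in>?S. lam i * F i x t * Y i x t) - (\<Sum>i\<in>?S. lam i * a i))"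
    unfolding Yt_rhs_def by (rule sum_Yt_rhs_expand)
  have "((\<lambda>s. By n lam k x s (\<lambda>l. Y l x s) (\<lambda>l. F l x s) a k) has_field_derivative
      - Yt_rhs n lam a Y F k x t + 6 * ((F k x t)\<^sup>2 + lam k) + 6 * t * (2 * F k x t * Ft_rhs n lam a Y F k x t) - ?D) (at t)"
    unfolding By_same
    by (rule sum_By_off_has_t_deriv[OF S xt k D L] derivative_eq_intros solves_xtD[OF S k xt] refl)+
       (simp add: algebra_simps)
  also have "- Yt_rhs n lam a Y F k x t + 6 * ((F k x t)\<^sup>2 + lam k) + 6 * t * (2 * F k x t * Ft_rhs n lam a Y F k x t) - ?D
    = 2 * ?uxB * (- Y k x t + 6 * t * ((F k x t)\<^sup>2 + lam k) - x - ((\<Sum>i\<in>?S. ?yB i) + (\<Sum>i\<in>?S. Y i x t)))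
      - 2 * (?uB + 2 * lam k) * (2 * (- Y k x t + 6 * t * ((F k x t)\<^sup>2 + lam k) - x
          - ((\<Sum>i\<in>?S. ?yB i) + (\<Sum>i\<in>?S. Y i x t))) * (- F k x t) - (1 - a k))"
    unfolding G_eq Yt_eq Yt_rhs_def[of n lam a Y F k x t] Ft_rhs_def[of n lam a Y F k x t]
    by (rule By_same_t_identity[OF t uu_remove[OF k] ux_rhs_remove[OF k] uxx_rhs_remove[OF k], unfolded Let_def])
  finally show ?thesis unfolding By_same sum.distrib .
qed

lemma solves_x_B:
  assumes X: "solves_x n lam a U Y F" and k: "k \<in> {1..n}" and t: "\<forall>(x,t)\<in>U. t \<noteq> 0"
    and D: "\<forall>(x,t)\<in>U. \<forall>i\<in>{1..n} - {k}. F i x t \<noteq> F k x t" and L: "\<forall>i\<in>{1..n} - {k}. lam i \<noteq> lam k"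
  shows "solves_x n lam (a(k := 1 - a k)) U (B_Y n lam k a Y F) (B_F lam k F)"
  unfolding solves_x_def
proof (intro ballI, clarify)
  fix j x t assume j: "j \<in> {1..n}" and xt: "(x,t) \<in> U"
  have t0: "t \<noteq> 0" and Dxt: "\<forall>i\<in>{1..n} - {k}. F i x t \<noteq> F k x t" using t D xt by auto
  have uB: "uu n (B_Y n lam k a Y F) x t = - uu n Y x t + 2 * (F k x t)\<^sup>2 + 2 * lam k"
    by (rule uu_B_Y[OF k t0])
  show "((\<lambda>s. B_Y n lam k a Y F j s t) has_field_derivative
          2 * B_Y n lam k a Y F j x t * B_F lam k F j x t - (a(k := 1 - a k)) j) (at x) \<and>
        ((\<lambda>s. B_F lam k F j s t) has_field_derivative
          uu n (B_Y n lam k a Y F) x t - (B_F lam k F j x t)\<^sup>2 - lam j) (at x)"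
  proof (cases "j = k")
    case True
    have "((\<lambda>s. - F k s t) has_field_derivative - (uu n Y x t - (F k x t)\<^sup>2 - lam k)) (at x)"
      by (intro DERIV_minus solves_xD(2)[OF X k xt])
    then show ?thesis
      using True By_same_has_x_deriv[OF X xt k t0 Dxt L] by (simp add: B_Y_apply B_F_apply uB algebra_simps)
  next
    case False
    then have D': "F j x t \<noteq> F k x t" and L': "lam j \<noteq> lam k" using j Dxt L by auto
    show ?thesis
      using False By_off_has_x_deriv[OF X xt j k D' L'] Bf_has_x_deriv[OF X xt j k D' L']
      by (simp add: B_Y_apply B_F_apply By_other uB)
  qed
qed

lemma ux_rhs_B:
  assumes X: "solves_x n lam a U Y F" and xt: "(x,t) \<in> U" and U: "open U" "\<forall>(x,t)\<in>U. t \<noteq> 0"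
    and k: "k \<in> {1..n}"
    and D: "\<forall>(x,t)\<in>U. \<forall>i\<in>{1..n} - {k}. F i x t \<noteq> F k x t" and L: "\<forall>i\<in>{1..n} - {k}. lam i \<noteq> lam k"
  shows "ux_rhs n (a(k := 1 - a k)) (B_Y n lam k a Y F) (B_F lam k F) x t
    = - ux_rhs n a Y F x t + 4 * F k x t * (uu n Y x t - (F k x t)\<^sup>2 - lam k)"
proof -
  have t0: "t \<noteq> 0" using U(2) xt by auto
  have "((\<lambda>s. - uu n Y s t + 2 * (F k s t)\<^sup>2 + 2 * lam k) has_field_derivative
      - ux_rhs n a Y F x t + 4 * F k x t * (uu n Y x t - (F k x t)\<^sup>2 - lam k)) (at x)"
    by (rule derivative_eq_intros uu_has_x_deriv[OF X xt t0] solves_xD(2)[OF X k xt] refl)+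
       (simp add: algebra_simps)
  then have "((\<lambda>s. uu n (B_Y n lam k a Y F) s t) has_field_derivative
      - ux_rhs n a Y F x t + 4 * F k x t * (uu n Y x t - (F k x t)\<^sup>2 - lam k)) (at x)"
    by (rule has_field_derivative_transform_within_open[OF _ open_x_section[OF U(1)]])
       (use xt U(2) in \<open>auto simp: uu_B_Y[OF k]\<close>)
  moreover have "((\<lambda>s. uu n (B_Y n lam k a Y F) s t) has_field_derivative
      ux_rhs n (a(k := 1 - a k)) (B_Y n lam k a Y F) (B_F lam k F) x t) (at x)"
    by (rule uu_has_x_deriv[OF solves_x_B[OF X k U(2) D L] xt t0])
  ultimately show ?thesis by (rule DERIV_unique[rotated])
qed

lemma uxx_rhs_B:
  assumes X: "solves_x n lam a U Y F" and xt: "(x,t) \<in> U" and U: "open U" "\<forall>(x,t)\<in>U. t \<noteq> 0"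
    and k: "k \<in> {1..n}"
    and D: "\<forall>(x,t)\<in>U. \<forall>i\<in>{1..n} - {k}. F i x t \<noteq> F k x t" and L: "\<forall>i\<in>{1..n} - {k}. lam i \<noteq> lam k"
  shows "uxx_rhs n lam (a(k := 1 - a k)) (B_Y n lam k a Y F) (B_F lam k F) x t
    = - uxx_rhs n lam a Y F x t + 4 * ((uu n Y x t - (F k x t)\<^sup>2 - lam k)\<^sup>2
        + F k x t * (ux_rhs n a Y F x t - 2 * F k x t * (uu n Y x t - (F k x t)\<^sup>2 - lam k)))"
proof -
  have t0: "t \<noteq> 0" using U(2) xt by auto
  have "((\<lambda>s. - ux_rhs n a Y F s t + 4 * F k s t * (uu n Y s t - (F k s t)\<^sup>2 - lam k)) has_field_derivative
      - uxx_rhs n lam a Y F x t + 4 * ((uu n Y x t - (F k x t)\<^sup>2 - lam k)\<^sup>2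
        + F k x t * (ux_rhs n a Y F x t - 2 * F k x t * (uu n Y x t - (F k x t)\<^sup>2 - lam k)))) (at x)"
    by (rule derivative_eq_intros ux_rhs_has_x_deriv[OF X xt] uu_has_x_deriv[OF X xt t0]
          solves_xD(2)[OF X k xt] refl)+
       (simp add: algebra_simps power2_eq_square)
  then have "((\<lambda>s. ux_rhs n (a(k := 1 - a k)) (B_Y n lam k a Y F) (B_F lam k F) s t) has_field_derivative
      - uxx_rhs n lam a Y F x t + 4 * ((uu n Y x t - (F k x t)\<^sup>2 - lam k)\<^sup>2
        + F k x t * (ux_rhs n a Y F x t - 2 * F k x t * (uu n Y x t - (F k x t)\<^sup>2 - lam k)))) (at x)"
    by (rule has_field_derivative_transform_within_open[OF _ open_x_section[OF U(1)]])
       (use xt in \<open>auto simp: ux_rhs_B[OF X _ U k D L]\<close>)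
  moreover have "((\<lambda>s. ux_rhs n (a(k := 1 - a k)) (B_Y n lam k a Y F) (B_F lam k F) s t) has_field_derivative
      uxx_rhs n lam (a(k := 1 - a k)) (B_Y n lam k a Y F) (B_F lam k F) x t) (at x)"
    by (rule ux_rhs_has_x_deriv[OF solves_x_B[OF X k U(2) D L] xt])
  ultimately show ?thesis by (rule DERIV_unique[rotated])
qed

lemma solves_xt_B:
  assumes S: "solves_xt n lam a U Y F" and U: "open U" "\<forall>(x,t)\<in>U. t \<noteq> 0" and k: "k \<in> {1..n}"
    and D: "\<forall>(x,t)\<in>U. \<forall>i\<in>{1..n} - {k}. F i x t \<noteq> F k x t" and L: "\<forall>i\<in>{1..n} - {k}. lam i \<noteq> lam k"
  shows "solves_xt n lam (a(k := 1 - a k)) U (B_Y n lam k a Y F) (B_F lam k F)"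
proof -
  have X: "solves_x n lam a U Y F" using S by (rule solves_xt_solves_x)
  show ?thesis
    unfolding solves_xt_def
  proof (intro conjI solves_x_B[OF X k U(2) D L] ballI, clarify)
    fix j x t assume j: "j \<in> {1..n}" and xt: "(x,t) \<in> U"
    have t0: "t \<noteq> 0" and Dxt: "\<forall>i\<in>{1..n} - {k}. F i x t \<noteq> F k x t" using U(2) D xt by auto
    note rhs = uu_B_Y[OF k t0] ux_rhs_B[OF X xt U k D L] uxx_rhs_B[OF X xt U k D L]
    show "((\<lambda>s. B_Y n lam k a Y F j x s) has_field_derivative
            Yt_rhs n lam (a(k := 1 - a k)) (B_Y n lam k a Y F) (B_F lam k F) j x t) (at t) \<and>
          ((\<lambda>s. B_F lam k F j x s) has_field_derivative
            Ft_rhs n lam (a(k := 1 - a k)) (B_Y n lam k a Y F) (B_F lam k F) j x t) (at t)"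
    proof (cases "j = k")
      case True
      have "((\<lambda>s. - F k x s) has_field_derivative - Ft_rhs n lam a Y F k x t) (at t)"
        by (intro DERIV_minus solves_xtD(2)[OF S k xt])
      moreover have "- Ft_rhs n lam a Y F k x t
          = Ft_rhs n lam (a(k := 1 - a k)) (B_Y n lam k a Y F) (B_F lam k F) k x t"
        unfolding Ft_rhs_def[of n lam "a(k := 1 - a k)"] rhs B_F_apply Bf_same Ft_rhs_def
        by (rule Bf_same_t_identity)
      ultimately show ?thesis
        using True By_same_has_t_deriv[OF S xt k t0 Dxt L]
        by (simp add: Yt_rhs_def rhs B_Y_apply B_F_apply)
    next
      case False
      then have D': "F j x t \<noteq> F k x t" and L': "lam j \<noteq> lam k" using j Dxt L by auto
      show ?thesis
        using False By_off_has_t_deriv[OF S xt j k D' L'] Bf_has_t_deriv[OF S xt j k D' L']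
        by (simp add: Yt_rhs_def Ft_rhs_def rhs B_Y_apply B_F_apply By_other)
    qed
  qed
qed

lemma B_map_preserves_solutions:
  assumes U: "open U" "\<forall>(x,t)\<in>U. t \<noteq> 0" and S: "is_solution n lam a U Y F" and k: "k \<in> {1..n}"
    and inj: "inj_on lam {1..n}" and D: "\<forall>(x,t)\<in>U. \<forall>j\<in>{1..n} - {k}. F j x t \<noteq> F k x t"
  shows "is_solution n lam (a(k := 1 - a k)) U (trY (B_map n lam k) a Y F) (trF (B_map n lam k) a Y F)"
proof -
  have L: "\<forall>i\<in>{1..n} - {k}. lam i \<noteq> lam k" using inj k by (auto dest: inj_onD)
  show ?thesis
    unfolding trY_B_map trF_B_map
    by (rule solves_xt_imp_is_solution[OF U solves_xt_B[OF is_solution_imp_solves_xt[OF U S] U k D L]])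
qed

section \<open>Relations between the maps\<close>

lemma A_map_A_map: "A_map k (A_map k s) = s"
  by (cases s) (simp add: A_map_def diff_divide_distrib[symmetric])

lemma A_map_commute: "j \<noteq> k \<Longrightarrow> A_map j (A_map k s) = A_map k (A_map j s)"
  by (cases s) (simp add: A_map_def fun_upd_twist)

lemma B_map_B_map:
  assumes k: "k \<in> {1..n}" and inj: "inj_on lam {1..n}" and ok: "B_ok n k s"
  shows "eq_on n (B_map n lam k x t (B_map n lam k x t s)) s"
proof -
  obtain y f a where s: "s = (y, f, a)" by (cases s)
  let ?S = "{1..n} - {k}"
  have D: "f i - f k \<noteq> 0" if "i \<in> ?S" for i
    using ok that by (simp add: s B_ok_eq)
  have L: "lam i - lam k \<noteq> 0" if "i \<in> ?S" for i
    using inj_onD[OF inj, of i k] k that by auto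
  have N: "(lam i - lam k) * inverse (f i - f k) \<noteq> 0" if "i \<in> ?S" for i
    using D[OF that] L[OF that] by simp
  note inv = left_inverse[OF D] left_inverse[OF L] left_inverse[OF N]
  have f_back: "Bf lam k (Bf lam k f) i = f i" if "i \<in> ?S" for i
    using inv[OF that] unfolding Bf_def divide_inverse by simp algebra
  have y_back: "By_off lam k (By n lam k x t y f a) (Bf lam k f) (a(k := 1 - a k)) i = y i" if i: "i \<in> ?S" for i
  proof -
    have ik: "i \<noteq> k" using i by auto
    show ?thesis using inv(1,2)[OF i]
      unfolding By_off_def Bf_def divide_inverse by (simp add: ik By_other By_off_def divide_inverse) algebra
  qed
  have "(\<Sum>j\<in>?S. By_off lam k (By n lam k x t y f a) (Bf lam k f) (a(k := 1 - a k)) j + By n lam k x t y f a j)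
      = (\<Sum>j\<in>?S. By_off lam k y f a j + y j)"
    by (rule sum.cong) (auto simp: y_back By_other)
  then have y_same: "By n lam k x t (By n lam k x t y f a) (Bf lam k f) (a(k := 1 - a k)) k = y k"
    by (simp add: By_same)
  have "By n lam k x t (By n lam k x t y f a) (Bf lam k f) (a(k := 1 - a k)) i = y i
      \<and> Bf lam k (Bf lam k f) i = f i" if "i \<in> {1..n}" for i
    using y_same f_back y_back that by (cases "i = k") (auto simp: By_other)
  then show ?thesis by (simp add: s B_map_eq eq_on_def)
qed

lemma Bf_Bf_comm_identity:
  fixes fi fj fk li lj lk :: complex
  assumes "fi \<noteq> fk" "fj \<noteq> fk" "fi \<noteq> fj"
    and N1: "- fk - (li - lk) / (fi - fk) \<noteq> - fk - (lj - lk) / (fj - fk)"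
    and N2: "- fj - (li - lj) / (fi - fj) \<noteq> - fj - (lk - lj) / (fk - fj)"
  shows "- (- fk - (lj - lk) / (fj - fk)) - (li - lj) / ((- fk - (li - lk) / (fi - fk)) - (- fk - (lj - lk) / (fj - fk)))
       = - (- fj - (lk - lj) / (fk - fj)) - (li - lk) / ((- fj - (li - lj) / (fi - fj)) - (- fj - (lk - lj) / (fk - fj)))"
proof -
  have "fi - fk \<noteq> 0" "fj - fk \<noteq> 0" "fi - fj \<noteq> 0" "fk - fj \<noteq> 0"
    "(- fk - (li - lk) / (fi - fk)) - (- fk - (lj - lk) / (fj - fk)) \<noteq> 0"
    "(- fj - (li - lj) / (fi - fj)) - (- fj - (lk - lj) / (fk - fj)) \<noteq> 0"
    using assms by auto
  note inv = this[THEN left_inverse]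
  show ?thesis using inv unfolding divide_inverse by algebra
qed

context
  fixes fi fj fk li lj lk yi ai :: complex
  assumes f: "fi \<noteq> fk" "fj \<noteq> fk" "fi \<noteq> fj" and l: "li \<noteq> lj" "li \<noteq> lk" "lj \<noteq> lk"
begin

private lemma inv: "inverse (fi - fk) * (fi - fk) = 1" "inverse (fj - fk) * (fj - fk) = 1"
    "inverse (fi - fj) * (fi - fj) = 1" "inverse (fk - fj) * (fk - fj) = 1"
    "inverse (li - lj) * (li - lj) = 1" "inverse (li - lk) * (li - lk) = 1" "inverse (lj - lk) * (lj - lk) = 1"
  using f l by auto

lemma By_off_By_off_comm_identity:
  "((- fk - (li - lk) / (fi - fk)) - (- fk - (lj - lk) / (fj - fk))) / (li - lj)
      * (((- fk - (li - lk) / (fi - fk)) - (- fk - (lj - lk) / (fj - fk))) * ((fi - fk) / (li - lk) * ((fi - fk) * yi - ai)) - ai)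
   = ((- fj - (li - lj) / (fi - fj)) - (- fj - (lk - lj) / (fk - fj))) / (li - lk)
      * (((- fj - (li - lj) / (fi - fj)) - (- fj - (lk - lj) / (fk - fj))) * ((fi - fj) / (li - lj) * ((fi - fj) * yi - ai)) - ai)"
  using inv unfolding divide_inverse by algebra

lemma By_off_By_off_cancel_identity:
  "(lj - lk) / (fj - fk)\<^sup>2 * ((fi - fk) / (li - lk) * ((fi - fk) * yi - ai) - (fi - fj) / (li - lj) * ((fi - fj) * yi - ai))
   + ((- fk - (li - lk) / (fi - fk)) - (- fk - (lj - lk) / (fj - fk))) / (li - lj)
      * (((- fk - (li - lk) / (fi - fk)) - (- fk - (lj - lk) / (fj - fk))) * ((fi - fk) / (li - lk) * ((fi - fk) * yi - ai)) - ai)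
   = yi"
  using inv unfolding divide_inverse power2_eq_square inverse_mult_distrib by algebra

end

lemma Bf_Bf_comm_identity_same:
  fixes fj fk lj lk :: complex
  assumes "fj \<noteq> fk" "lj \<noteq> lk"
  shows "- (- fk - (lj - lk) / (fj - fk)) = - (- fj - (lk - lj) / (fk - fj)) - (lj - lk) / ((- fj) - (- fj - (lk - lj) / (fk - fj)))"
proof -
  have "fj - fk \<noteq> 0" "fk - fj \<noteq> 0" "lj - lk \<noteq> 0" "(- fj) - (- fj - (lk - lj) / (fk - fj)) \<noteq> 0"
    using assms by auto
  note inv = this[THEN left_inverse]
  show ?thesis using inv unfolding divide_inverse by algebra
qed

lemma By_By_comm_identity:
  fixes fj fk yj yk aj ak lj lk x t P Pk Pj Z :: complex
  assumes "fj \<noteq> fk" "lj \<noteq> lk" and HZ: "Z = P - (lj - lk) / (fj - fk)\<^sup>2 * (Pk - Pj)"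
  shows "- ((fj - fk) / (lj - lk) * ((fj - fk) * yj - aj)) + 6 * t * ((- fk - (lj - lk) / (fj - fk))\<^sup>2 + lj) - x
      - ((((- fk) - (- fk - (lj - lk) / (fj - fk))) / (lk - lj) * (((- fk) - (- fk - (lj - lk) / (fj - fk)))
            * (- yk + 6 * t * (fk\<^sup>2 + lk) - x - ((((fj - fk) / (lj - lk) * ((fj - fk) * yj - aj)) + yj) + (Pk + P))) - (1 - ak))
          + (- yk + 6 * t * (fk\<^sup>2 + lk) - x - ((((fj - fk) / (lj - lk) * ((fj - fk) * yj - aj)) + yj) + (Pk + P))))
         + (Z + Pk))
    = ((- fj) - (- fj - (lk - lj) / (fk - fj))) / (lj - lk) * (((- fj) - (- fj - (lk - lj) / (fk - fj)))
        * (- yj + 6 * t * (fj\<^sup>2 + lj) - x - ((((fk - fj) / (lk - lj) * ((fk - fj) * yk - ak)) + yk) + (Pj + P))) - (1 - aj))"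
proof -
  have "fj - fk \<noteq> 0" "fk - fj \<noteq> 0" "lj - lk \<noteq> 0" "lk - lj \<noteq> 0"
    using assms by auto
  note inv = this[THEN left_inverse]
  show ?thesis using inv unfolding HZ divide_inverse power2_eq_square inverse_mult_distrib by algebra
qed

lemma sum_split_off_index:
  assumes "j \<noteq> k" "k \<in> {1..n::nat}"
  shows "(\<Sum>i\<in>{1..n} - {j}. g i + h i) = (g k + h k) + ((\<Sum>i\<in>{1..n} - {j, k}. g i) + (\<Sum>i\<in>{1..n} - {j, k}. h i))"
proof -
  have "{1..n} - {j} = insert k ({1..n} - {j, k})" using assms by auto
  then show ?thesis by (simp add: sum.distrib algebra_simps)
qed

lemma By_same_split_off:
  assumes "j \<noteq> k" "j \<in> {1..n}"
  shows "By n lam k x t y f a k = - y k + 6 * t * ((f k)\<^sup>2 + lam k) - x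
    - (((f j - f k) / (lam j - lam k) * ((f j - f k) * y j - a j) + y j)
       + ((\<Sum>i\<in>{1..n} - {j, k}. By_off lam k y f a i) + (\<Sum>i\<in>{1..n} - {j, k}. y i)))"
  using sum_split_off_index[of k j n "By_off lam k y f a" y] assms
  by (simp add: By_same By_off_def[of lam k y f a j] insert_commute)

locale B_commuting_pair =
  fixes n :: nat and lam :: "nat \<Rightarrow> complex" and j k :: nat and y f a :: "nat \<Rightarrow> complex" and x t :: complex
  assumes jk: "j \<noteq> k" and j: "j \<in> {1..n}" and k: "k \<in> {1..n}" and inj: "inj_on lam {1..n}"
    and ok_k: "\<forall>i\<in>{1..n} - {k}. f i \<noteq> f k"
    and ok_j: "\<forall>i\<in>{1..n} - {j}. f i \<noteq> f j"
    and ok_jk: "\<forall>i\<in>{1..n} - {j}. Bf lam k f i \<noteq> Bf lam k f j"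
    and ok_kj: "\<forall>i\<in>{1..n} - {k}. Bf lam j f i \<noteq> Bf lam j f k"
begin

lemma lam_ne: "i \<in> {1..n} \<Longrightarrow> i' \<in> {1..n} \<Longrightarrow> i \<noteq> i' \<Longrightarrow> lam i \<noteq> lam i'"
  using inj by (auto dest: inj_onD)

lemma third_index:
  assumes i: "i \<in> {1..n} - {j, k}"
  shows "Bf lam j (Bf lam k f) i = Bf lam k (Bf lam j f) i"
    and "By_off lam j (By n lam k x t y f a) (Bf lam k f) (a(k := 1 - a k)) i
       = By_off lam k (By n lam j x t y f a) (Bf lam j f) (a(j := 1 - a j)) i"
    and "(lam j - lam k) / (f j - f k)\<^sup>2 * (By_off lam k y f a i - By_off lam j y f a i)
       + By_off lam j (By n lam k x t y f a) (Bf lam k f) (a(k := 1 - a k)) i = y i"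
proof -
  have ij: "i \<noteq> j" and ik: "i \<noteq> k" and i1: "i \<in> {1..n}" using i by auto
  have fs: "f i \<noteq> f k" "f j \<noteq> f k" "f i \<noteq> f j" using ok_k ok_j i j jk by auto
  have ls: "lam i \<noteq> lam j" "lam i \<noteq> lam k" "lam j \<noteq> lam k" using lam_ne i1 j k ij ik jk by auto
  have N1: "- f k - (lam i - lam k) / (f i - f k) \<noteq> - f k - (lam j - lam k) / (f j - f k)"
    using ok_jk i unfolding Bf_def by auto
  have N2: "- f j - (lam i - lam j) / (f i - f j) \<noteq> - f j - (lam k - lam j) / (f k - f j)"
    using ok_kj i unfolding Bf_def by auto
  show "Bf lam j (Bf lam k f) i = Bf lam k (Bf lam j f) i"
    using Bf_Bf_comm_identity[OF fs N1 N2] unfolding Bf_def by simp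
  show "By_off lam j (By n lam k x t y f a) (Bf lam k f) (a(k := 1 - a k)) i
      = By_off lam k (By n lam j x t y f a) (Bf lam j f) (a(j := 1 - a j)) i"
    using By_off_By_off_comm_identity[OF fs ls, of "y i" "a i"] ij ik
    by (simp add: Bf_def By_off_def By_other)
  show "(lam j - lam k) / (f j - f k)\<^sup>2 * (By_off lam k y f a i - By_off lam j y f a i)
      + By_off lam j (By n lam k x t y f a) (Bf lam k f) (a(k := 1 - a k)) i = y i"
    using By_off_By_off_cancel_identity[OF fs ls, of "y i" "a i"] ij ik
    by (simp add: Bf_def By_off_def By_other)
qed

lemma Bf_Bf_comm_same: "Bf lam j (Bf lam k f) j = Bf lam k (Bf lam j f) j"
proof -
  have fjk: "f j \<noteq> f k" using ok_k j jk by auto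
  have "Bf lam j (Bf lam k f) j = - (- f k - (lam j - lam k) / (f j - f k))"
    unfolding Bf_same Bf_def[of lam k f j] ..
  also have "\<dots> = - (- f j - (lam k - lam j) / (f k - f j)) - (lam j - lam k) / ((- f j) - (- f j - (lam k - lam j) / (f k - f j)))"
    by (rule Bf_Bf_comm_identity_same[OF fjk lam_ne[OF j k jk]])
  also have "\<dots> = Bf lam k (Bf lam j f) j"
    unfolding Bf_def[of lam k "Bf lam j f" j] Bf_same Bf_def[of lam j f k] ..
  finally show ?thesis .
qed

lemma third_index_sum:
  "(\<Sum>i\<in>{1..n} - {j, k}. By_off lam j (By n lam k x t y f a) (Bf lam k f) (a(k := 1 - a k)) i)
   = (\<Sum>i\<in>{1..n} - {j, k}. y i) - (lam j - lam k) / (f j - f k)\<^sup>2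
       * ((\<Sum>i\<in>{1..n} - {j, k}. By_off lam k y f a i) - (\<Sum>i\<in>{1..n} - {j, k}. By_off lam j y f a i))"
proof -
  let ?c = "(lam j - lam k) / (f j - f k)\<^sup>2"
  have "(\<Sum>i\<in>{1..n} - {j, k}. y i) = (\<Sum>i\<in>{1..n} - {j, k}. ?c * (By_off lam k y f a i - By_off lam j y f a i)
      + By_off lam j (By n lam k x t y f a) (Bf lam k f) (a(k := 1 - a k)) i)"
    by (rule sum.cong[OF refl]) (use third_index(3) in simp)
  also have "\<dots> = ?c * ((\<Sum>i\<in>{1..n} - {j, k}. By_off lam k y f a i) - (\<Sum>i\<in>{1..n} - {j, k}. By_off lam j y f a i))
      + (\<Sum>i\<in>{1..n} - {j, k}. By_off lam j (By n lam k x t y f a) (Bf lam k f) (a(k := 1 - a k)) i)"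
    by (simp only: sum.distrib) (simp only: sum_distrib_left[symmetric] sum_subtractf)
  finally show ?thesis by simp
qed

lemma By_By_comm_same:
  "By n lam j x t (By n lam k x t y f a) (Bf lam k f) (a(k := 1 - a k)) j
   = By_off lam k (By n lam j x t y f a) (Bf lam j f) (a(j := 1 - a j)) j"
proof -
  let ?S = "{1..n} - {j, k}"
  let ?z = "\<lambda>i. By_off lam j (By n lam k x t y f a) (Bf lam k f) (a(k := 1 - a k)) i"
  let ?P = "\<Sum>i\<in>?S. y i" and ?Pk = "\<Sum>i\<in>?S. By_off lam k y f a i"
    and ?Pj = "\<Sum>i\<in>?S. By_off lam j y f a i"
  have fjk: "f j \<noteq> f k" using ok_k j jk by auto
  have ljk: "lam j \<noteq> lam k" using lam_ne[OF j k jk] .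
  have kj: "k \<noteq> j" using jk by auto
  have "(\<Sum>i\<in>?S. By n lam k x t y f a i) = ?Pk" by (simp add: By_other)
  then have sum_j: "(\<Sum>i\<in>{1..n} - {j}. ?z i + By n lam k x t y f a i)
      = (?z k + By n lam k x t y f a k) + ((\<Sum>i\<in>?S. ?z i) + ?Pk)"
    unfolding sum_split_off_index[OF jk k] by simp
  have By_k: "By n lam k x t y f a j = (f j - f k) / (lam j - lam k) * ((f j - f k) * y j - a j)"
    using jk by (simp add: By_other By_off_def)
  have z_k: "?z k = (Bf lam k f k - Bf lam k f j) / (lam k - lam j)
      * ((Bf lam k f k - Bf lam k f j) * By n lam k x t y f a k - (1 - a k))"
    unfolding By_off_def[of lam j "By n lam k x t y f a" "Bf lam k f" "a(k := 1 - a k)" k] by simp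
  have "By n lam j x t (By n lam k x t y f a) (Bf lam k f) (a(k := 1 - a k)) j
     = - By n lam k x t y f a j + 6 * t * ((Bf lam k f j)\<^sup>2 + lam j) - x
       - ((?z k + By n lam k x t y f a k) + ((\<Sum>i\<in>?S. ?z i) + ?Pk))"
    unfolding By_same sum_j ..
  also have "\<dots> = ((- f j) - (- f j - (lam k - lam j) / (f k - f j))) / (lam j - lam k)
      * (((- f j) - (- f j - (lam k - lam j) / (f k - f j)))
      * (- y j + 6 * t * ((f j)\<^sup>2 + lam j) - x - ((((f k - f j) / (lam k - lam j) * ((f k - f j) * y k - a k)) + y k)
      + (?Pj + ?P))) - (1 - a j))"
    unfolding z_k By_k Bf_def[of lam k f j] Bf_same By_same_split_off[OF jk j]
    by (rule By_By_comm_identity[OF fjk ljk third_index_sum])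
  also have "\<dots> = By_off lam k (By n lam j x t y f a) (Bf lam j f) (a(j := 1 - a j)) j"
    unfolding By_off_def[of lam k "By n lam j x t y f a" "Bf lam j f" "a(j := 1 - a j)" j] Bf_same
      Bf_def[of lam j f k] By_same_split_off[OF kj k] insert_commute[of k j] by simp
  finally show ?thesis .
qed

end

lemma B_map_commute:
  assumes jk: "j \<noteq> k" and j: "j \<in> {1..n}" and k: "k \<in> {1..n}" and inj: "inj_on lam {1..n}"
    and ok: "B_ok n k s" "B_ok n j (B_map n lam k x t s)" "B_ok n j s" "B_ok n k (B_map n lam j x t s)"
  shows "eq_on n (B_map n lam j x t (B_map n lam k x t s)) (B_map n lam k x t (B_map n lam j x t s))"
proof -
  obtain y f a where s: "s = (y, f, a)" by (cases s)
  interpret jk: B_commuting_pair n lam j k y f a x t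
    using jk j k inj ok by unfold_locales (simp_all add: s B_ok_def B_map_eq)
  interpret kj: B_commuting_pair n lam k j y f a x t
    using jk j k inj ok by unfold_locales (simp_all add: s B_ok_def B_map_eq)
  have "By n lam j x t (By n lam k x t y f a) (Bf lam k f) (a(k := 1 - a k)) i
      = By n lam k x t (By n lam j x t y f a) (Bf lam j f) (a(j := 1 - a j)) i
    \<and> Bf lam j (Bf lam k f) i = Bf lam k (Bf lam j f) i" if i: "i \<in> {1..n}" for i
  proof -
    consider "i = j" | "i = k" | "i \<in> {1..n} - {j, k}" using i by auto
    then show ?thesis
    proof cases
      case 1
      then show ?thesis using jk jk.By_By_comm_same jk.Bf_Bf_comm_same by (simp add: By_other)
    next
      case 2
      then show ?thesis using jk kj.By_By_comm_same kj.Bf_Bf_comm_same by (simp add: By_other)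
    next
      case 3
      then show ?thesis using jk.third_index(1,2) by (auto simp: By_other)
    qed
  qed
  then show ?thesis using jk by (simp add: s B_map_eq eq_on_def fun_upd_twist)
qed

lemma A_B_comm_identities:
  fixes fj fk yj aj lj lk :: complex
  assumes D: "fj \<noteq> fk" and Y: "yj \<noteq> 0" and L: "lj \<noteq> lk" and N: "(fj - fk) * yj - aj \<noteq> 0"
  shows "(fj - fk) / (lj - lk) * ((fj - fk) * yj - aj) = ((fj - aj / yj) - fk) / (lj - lk) * (((fj - aj / yj) - fk) * yj - (- aj))"
    and "- fk - (lj - lk) / (fj - fk) - aj / ((fj - fk) / (lj - lk) * ((fj - fk) * yj - aj)) = - fk - (lj - lk) / ((fj - aj / yj) - fk)"
proof -
  have "(fj - aj / yj) - fk = ((fj - fk) * yj - aj) / yj" using Y by (simp add: field_simps)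
  then have N': "(fj - aj / yj) - fk \<noteq> 0" using N Y by simp
  have "fj - fk \<noteq> 0" "lj - lk \<noteq> 0" using D L by simp_all
  note inv = left_inverse[OF this(1)] left_inverse[OF Y] left_inverse[OF this(2)] left_inverse[OF N] left_inverse[OF N']
  show "(fj - fk) / (lj - lk) * ((fj - fk) * yj - aj) = ((fj - aj / yj) - fk) / (lj - lk) * (((fj - aj / yj) - fk) * yj - (- aj))"
    using inv unfolding divide_inverse by algebra
  show "- fk - (lj - lk) / (fj - fk) - aj / ((fj - fk) / (lj - lk) * ((fj - fk) * yj - aj)) = - fk - (lj - lk) / ((fj - aj / yj) - fk)"
    using inv unfolding divide_inverse inverse_mult_distrib inverse_inverse_eq by algebra
qed

lemma A_B_map_commute:
  assumes jk: "j \<noteq> k" and j: "j \<in> {1..n}" and k: "k \<in> {1..n}" and inj: "inj_on lam {1..n}"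
    and ok: "B_ok n k s" "A_ok j (B_map n lam k x t s)" "A_ok j s"
  shows "eq_on n (A_map j (B_map n lam k x t s)) (B_map n lam k x t (A_map j s))"
proof -
  obtain y f a where s: "s = (y, f, a)" by (cases s)
  have D: "f j \<noteq> f k" using ok(1) j jk by (simp add: s B_ok_eq)
  have L: "lam j \<noteq> lam k" using inj_onD[OF inj, of j k] j k jk by auto
  have Y: "y j \<noteq> 0" using ok(3) by (simp add: s A_ok_def)
  have "By_off lam k y f a j \<noteq> 0" using ok(2) jk by (simp add: s A_ok_def B_map_eq By_other)
  then have N: "(f j - f k) * y j - a j \<noteq> 0" by (auto simp: By_off_def)
  note AB = A_B_comm_identities[OF D Y L N]
  have y_off: "By_off lam k y (f(j := f j - a j / y j)) (a(j := - a j)) i = By_off lam k y f a i" for i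
    using AB(1)[symmetric] jk by (cases "i = j") (simp_all add: By_off_def)
  then have "By n lam k x t y (f(j := f j - a j / y j)) (a(j := - a j)) i = By n lam k x t y f a i" for i
    using jk by (simp add: By_def)
  moreover have "((Bf lam k f)(j := Bf lam k f j - (a(k := 1 - a k)) j / By n lam k x t y f a j)) i
      = Bf lam k (f(j := f j - a j / y j)) i" for i
    using AB(2) jk by (cases "i = j") (simp_all add: Bf_def By_other By_off_def)
  ultimately show ?thesis
    using jk by (simp add: s A_map_def B_map_eq eq_on_def fun_upd_twist)
qed

theorem mainTheorem5:
  fixes n :: nat and lam :: "nat \<Rightarrow> complex"
  assumes n1: "n \<ge> 1"
    and lam_distinct: "\<forall>i\<in>{1..n}. \<forall>j\<in>{1..n}. i \<noteq> j \<longrightarrow> lam i \<noteq> lam j"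
  shows
    "(\<forall>k\<in>{1..n}. \<forall>(a::nat \<Rightarrow> complex) U Y F.
        open U \<longrightarrow> (\<forall>(x,t)\<in>U. t \<noteq> 0) \<longrightarrow> is_solution n lam a U Y F \<longrightarrow>
        (\<forall>(x,t)\<in>U. Y k x t \<noteq> 0) \<longrightarrow>
        is_solution n lam (a(k := - a k)) U
           (trY (\<lambda>x t. A_map k) a Y F) (trF (\<lambda>x t. A_map k) a Y F))
   \<and> (\<forall>k\<in>{1..n}. \<forall>(a::nat \<Rightarrow> complex) U Y F.
        open U \<longrightarrow> (\<forall>(x,t)\<in>U. t \<noteq> 0) \<longrightarrow> is_solution n lam a U Y F \<longrightarrow>
        (\<forall>(x,t)\<in>U. \<forall>j\<in>{1..n} - {k}. F j x t \<noteq> F k x t) \<longrightarrow>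
        is_solution n lam (a(k := 1 - a k)) U
           (trY (B_map n lam k) a Y F) (trF (B_map n lam k) a Y F))
   \<and> (\<forall>k\<in>{1..n}. \<forall>s. A_ok k s \<and> A_ok k (A_map k s) \<longrightarrow> eq_on n (A_map k (A_map k s)) s)
   \<and> (\<forall>j\<in>{1..n}. \<forall>k\<in>{1..n}. j \<noteq> k \<longrightarrow> (\<forall>s.
        A_ok k s \<and> A_ok j (A_map k s) \<and> A_ok j s \<and> A_ok k (A_map j s) \<longrightarrow>
        eq_on n (A_map j (A_map k s)) (A_map k (A_map j s))))
   \<and> (\<forall>k\<in>{1..n}. \<forall>x t s. B_ok n k s \<and> B_ok n k (B_map n lam k x t s) \<longrightarrow>
        eq_on n (B_map n lam k x t (B_map n lam k x t s)) s)
   \<and> (\<forall>j\<in>{1..n}. \<forall>k\<in>{1..n}. j \<noteq> k \<longrightarrow> (\<forall>x t s.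
        B_ok n k s \<and> B_ok n j (B_map n lam k x t s) \<and> B_ok n j s \<and> B_ok n k (B_map n lam j x t s) \<longrightarrow>
        eq_on n (B_map n lam j x t (B_map n lam k x t s)) (B_map n lam k x t (B_map n lam j x t s))))
   \<and> (\<forall>j\<in>{1..n}. \<forall>k\<in>{1..n}. j \<noteq> k \<longrightarrow> (\<forall>x t s.
        B_ok n k s \<and> A_ok j (B_map n lam k x t s) \<and> A_ok j s \<and> B_ok n k (A_map j s) \<longrightarrow>
        eq_on n (A_map j (B_map n lam k x t s)) (B_map n lam k x t (A_map j s))))"
proof -
  have inj: "inj_on lam {1..n}" using lam_distinct by (auto simp: inj_on_def)
  have eq_on_refl: "eq_on n s s" for s by (simp add: eq_on_def)
  show ?thesis
    by (intro conjI ballI allI impI; (elim conjE)?)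
       (auto intro!: A_map_preserves_solutions B_map_preserves_solutions[OF _ _ _ _ inj]
          B_map_B_map[OF _ inj] B_map_commute[OF _ _ _ inj] A_B_map_commute[OF _ _ _ inj]
          simp: A_map_A_map A_map_commute eq_on_refl)
qed

end
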